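(* Let $N=2^L$ with $L$ a positive integer, let $D_1,\ldots,D_N,R$ be positive integers, let $\mathcal{A}\in\mathbb{R}^{D_1\times\cdots\times D_N}$ and $\epsilon>0$. Suppose that for all canonical partitions $(\mathcal{K},\mathcal{K}^c)\in\mathcal{C}_N$ it holds that $\mathrm{QE}(\mathcal{A};\mathcal{K})\le\frac{\epsilon^2}{(2N-3)\|\mathcal{A}\|^2}\ln(R)$. Then there exists an assignment of the tensors of the locally connected tensor network of width $R$ such that the tensor $\mathcal{W}_{\mathrm{TN}}\in\mathbb{R}^{D_1\times\cdots\times D_N}$ it generates satisfies $\|\mathcal{W}_{\mathrm{TN}}-\mathcal{A}\|\le\epsilon$.
   Context: $[N]=\{1,\ldots,N\}$; norms are Frobenius (Euclidean) norms. For a tensor $\mathcal{A}\in\mathbb{R}^{D_1\times\cdots\times D_N}$ and $\mathcal{K}\subseteq[N]$, $\mathcal{K}^c=[N]\setminus\mathcal{K}$, $[\![\mathcal{A};\mathcal{K}]\!]$ is the matrix arrangement of $\mathcal{A}$ with rows indexed by the axes in $\mathcal{K}$ and columns by the axes in $\mathcal{K}^c$, and $D_{\mathcal{K}}:=\min\{\prod_{n\in\mathcal{K}}D_n,\prod_{n\in\mathcal{K}^c}D_n\}$. The quantum entanglement is $\mathrm{QE}(\mathcal{A};\mathcal{K}):=-\sum_{d=1}^{D_{\mathcal{K}}}\rho_d\ln\rho_d$ where $\rho_d=\sigma_d^2/\sum_{d'}\sigma_{d'}^2$ and $\sigma_1\ge\cdots\ge\sigma_{D_{\mathcal{K}}}$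 are the singular values of $[\![\mathcal{A};\mathcal{K}]\!]$; by convention $\mathrm{QE}(0;\mathcal{K})=0$. The canonical partitions $\mathcal{C}_N$ are the pairs $(\mathcal{K},\mathcal{K}^c)$ with $\mathcal{K}=\{2^{L-l}(n-1)+1,\ldots,2^{L-l}n\}$ for $l\in\{0,\ldots,L\}$, $n\in[2^l]$. The locally connected tensor network of width $R$ is a tensor network whose graph is a perfect binary tree with $N$ leaves, the open edge at the $n$-th leaf having dimension $D_n$ and all inner edges having dimension $R$; the tensors it generates are exactly those of the form: choose vectors $\phi^{(0,n)}_r\in\mathbb{R}^{D_n}$ ($n\in[N]$, $r\in[R]$); for $l=1,\ldots,L-1$, $n\in[2^{L-l}]$, $r\in[R]$ set $\phi^{(l,n)}_r=\sum_{i,j\in[R]}a^{(l,n)}_{r,i,j}\,\phi^{(l-1,2n-1)}_i\otimes\phi^{(l-1,2n)}_j$ with arbitrary real coefficients; and $\mathcal{W}_{\mathrm{TN}}=\sum_{i,j\in[R]}a_{i,j}\,\phi^{(L-1,1)}_i\otimes\phi^{(L-1,2)}_j$. *)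

theory Defs
  imports Complex_Main "HOL-Library.FuncSet"
begin

text \<open>Tensors in R^{D_1 x ... x D_N} are functions on index maps (nat => nat); only
  the entries at index maps in tidx D N (axes 1..N, index of axis n in {0..<D n}) matter.\<close>

definition tidx :: "(nat \<Rightarrow> nat) \<Rightarrow> nat set \<Rightarrow> (nat \<Rightarrow> nat) set" where
  "tidx D K = PiE K (\<lambda>n. {..<D n})"

definition tnorm :: "(nat \<Rightarrow> nat) \<Rightarrow> nat \<Rightarrow> ((nat \<Rightarrow> nat) \<Rightarrow> real) \<Rightarrow> real" where
  "tnorm D N A = sqrt (\<Sum>i\<in>tidx D {1..N}. (A i)^2)"

definition matricize :: "((nat \<Rightarrow> nat) \<Rightarrow> real) \<Rightarrow> nat set \<Rightarrow> (nat \<Rightarrow> nat) \<Rightarrow> (nat \<Rightarrow> nat) \<Rightarrow> real" where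
  "matricize A K r c = A (\<lambda>n. if n \<in> K then r n else c n)"

text \<open>Singular value decomposition of a matrix with finite row/column index sets;
  singular values sigma 0 >= sigma 1 >= ... (0-based), m = min(#rows, #cols).\<close>
definition is_svd :: "'r set \<Rightarrow> 'c set \<Rightarrow> ('r \<Rightarrow> 'c \<Rightarrow> real) \<Rightarrow> (nat \<Rightarrow> real)
    \<Rightarrow> (nat \<Rightarrow> 'r \<Rightarrow> real) \<Rightarrow> (nat \<Rightarrow> 'c \<Rightarrow> real) \<Rightarrow> bool" where
  "is_svd Rs Cs M \<sigma> u v \<longleftrightarrow>
     (let m = min (card Rs) (card Cs) in
       (\<forall>d<m. 0 \<le> \<sigma> d) \<and> (\<forall>d. Suc d < m \<longrightarrow> \<sigma> (Suc d) \<le> \<sigma> d) \<and>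
       (\<forall>d<m. \<forall>d'<m. (\<Sum>r\<in>Rs. u d r * u d' r) = (if d = d' then 1 else 0)) \<and>
       (\<forall>d<m. \<forall>d'<m. (\<Sum>c\<in>Cs. v d c * v d' c) = (if d = d' then 1 else 0)) \<and>
       (\<forall>r\<in>Rs. \<forall>c\<in>Cs. M r c = (\<Sum>d<m. \<sigma> d * u d r * v d c)))"

definition sing_vals :: "'r set \<Rightarrow> 'c set \<Rightarrow> ('r \<Rightarrow> 'c \<Rightarrow> real) \<Rightarrow> nat \<Rightarrow> real" where
  "sing_vals Rs Cs M = (SOME \<sigma>. \<exists>u v. is_svd Rs Cs M \<sigma> u v)"

definition QE :: "(nat \<Rightarrow> nat) \<Rightarrow> nat \<Rightarrow> ((nat \<Rightarrow> nat) \<Rightarrow> real) \<Rightarrow> nat set \<Rightarrow> real" where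
  "QE D N A K =
     (let Rs = tidx D K; Cs = tidx D ({1..N} - K);
          \<sigma> = sing_vals Rs Cs (matricize A K);
          m = min (card Rs) (card Cs);
          S = (\<Sum>d<m. (\<sigma> d)^2)
      in if S = 0 then 0 else - (\<Sum>d<m. ((\<sigma> d)^2 / S) * ln ((\<sigma> d)^2 / S)))"

text \<open>Canonical partitions for N = 2^L (the set K; K^c is its complement in {1..N}).\<close>
definition canonical_parts :: "nat \<Rightarrow> nat set set" where
  "canonical_parts L = {{2^(L-l)*(n-1)+1 .. 2^(L-l)*n} | l n. l \<le> L \<and> n \<in> {1..2^l}}"

text \<open>Locally connected tensor network of width R (inner indices 0..<R).
  v n r = phi^(0,n)_r (a vector in R^{D_n}, entries v n r k, k < D n);
  a l n r i j = coefficients a^(l,n)_{r,i,j}; c i j = a_{i,j}.\<close>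
fun tn_phi :: "nat \<Rightarrow> (nat \<Rightarrow> nat \<Rightarrow> nat \<Rightarrow> real) \<Rightarrow> (nat \<Rightarrow> nat \<Rightarrow> nat \<Rightarrow> nat \<Rightarrow> nat \<Rightarrow> real)
    \<Rightarrow> nat \<Rightarrow> nat \<Rightarrow> nat \<Rightarrow> (nat \<Rightarrow> nat) \<Rightarrow> real" where
  "tn_phi R v a 0 n r idx = v n r (idx n)"
| "tn_phi R v a (Suc l) n r idx =
     (\<Sum>i<R. \<Sum>j<R. a (Suc l) n r i j * tn_phi R v a l (2*n-1) i idx * tn_phi R v a l (2*n) j idx)"

definition tn_W :: "nat \<Rightarrow> (nat \<Rightarrow> nat \<Rightarrow> nat \<Rightarrow> real) \<Rightarrow> (nat \<Rightarrow> nat \<Rightarrow> nat \<Rightarrow> nat \<Rightarrow> nat \<Rightarrow> real)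
    \<Rightarrow> (nat \<Rightarrow> nat \<Rightarrow> real) \<Rightarrow> nat \<Rightarrow> (nat \<Rightarrow> nat) \<Rightarrow> real" where
  "tn_W R v a c L idx =
     (\<Sum>i<R. \<Sum>j<R. c i j * tn_phi R v a (L-1) 1 i idx * tn_phi R v a (L-1) 2 j idx)"

end

theory Submission
  imports Defs "HOL-Analysis.Analysis"
begin

text \<open>The approximating network comes from a hierarchical truncated SVD of \<open>A\<close>. At every node of the
  tree, the columns of the matricization of \<open>A\<close> along the node's block of axes are projected onto
  the span of its top \<open>R\<close> left singular vectors; choosing the network's coefficients as the
  coordinates of each node's vectors in the products of its children's vectors makes the composition
  of all these projections, applied to \<open>A\<close>, a tensor generated by the network.

  An orthogonal projection \<open>P\<close> satisfies \<open>\<parallel>A - P B\<parallel>\<^sup>2 \<le> \<parallel>A - P A\<parallel>\<^sup>2 + \<parallel>A - B\<parallel>\<^sup>2\<close>, so the squared errors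
  of the \<open>2N - 3\<close> truncations add up (the two children of the root share one SVD and count once).
  Each truncation error is the tail of the spectrum, the sum of \<open>\<sigma>\<^sub>d\<^sup>2\<close> over \<open>d \<ge> R\<close>. Since a
  nonincreasing probability vector has \<open>\<rho>\<^sub>d \<le> 1/(d+1)\<close>, the entanglement is at least \<open>ln R\<close> times
  the relative weight of that tail, so the hypothesis bounds every truncation error by \<open>\<epsilon>\<^sup>2/(2N - 3)\<close>.\<close>


section \<open>Inner products and orthonormal families\<close>

definition inner_on :: "'a set \<Rightarrow> ('a \<Rightarrow> real) \<Rightarrow> ('a \<Rightarrow> real) \<Rightarrow> real" where
  "inner_on S x y = (\<Sum>s\<in>S. x s * y s)"

definition orthonormal_on :: "'a set \<Rightarrow> (nat \<Rightarrow> 'a \<Rightarrow> real) \<Rightarrow> nat \<Rightarrow> bool" where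
  "orthonormal_on S w k \<longleftrightarrow> (\<forall>d<k. \<forall>d'<k. inner_on S (w d) (w d') = (if d = d' then 1 else 0))"

definition proj_on :: "'a set \<Rightarrow> (nat \<Rightarrow> 'a \<Rightarrow> real) \<Rightarrow> nat \<Rightarrow> ('a \<Rightarrow> real) \<Rightarrow> 'a \<Rightarrow> real" where
  "proj_on S w k x = (\<lambda>s. \<Sum>d<k. inner_on S x (w d) * w d s)"

definition unit_vec :: "'a \<Rightarrow> 'a \<Rightarrow> real" where
  "unit_vec c = (\<lambda>s. if s = c then 1 else 0)"

lemma inner_on_commute: "inner_on S x y = inner_on S y x"
  unfolding inner_on_def by (simp add: mult.commute)

lemma inner_on_add_right: "inner_on S z (\<lambda>s. x s + y s) = inner_on S z x + inner_on S z y"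
  unfolding inner_on_def by (simp add: distrib_left sum.distrib)

lemma inner_on_diff_left: "inner_on S (\<lambda>s. x s - y s) z = inner_on S x z - inner_on S y z"
  unfolding inner_on_def by (simp add: left_diff_distrib sum_subtractf)

lemma inner_on_diff_right: "inner_on S z (\<lambda>s. x s - y s) = inner_on S z x - inner_on S z y"
  unfolding inner_on_def by (simp add: right_diff_distrib sum_subtractf)

lemma inner_on_scale_left: "inner_on S (\<lambda>s. c * x s) z = c * inner_on S x z"
  unfolding inner_on_def by (simp add: sum_distrib_left mult.assoc)

lemma inner_on_scale_right: "inner_on S z (\<lambda>s. c * x s) = c * inner_on S z x"
  unfolding inner_on_def by (simp add: sum_distrib_left mult.left_commute)

lemma inner_on_sum_left: "inner_on S (\<lambda>s. \<Sum>d\<in>F. f d s) z = (\<Sum>d\<in>F. inner_on S (f d) z)"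
  unfolding inner_on_def sum_distrib_right by (rule sum.swap)

lemma inner_on_zero_left [simp]: "inner_on S (\<lambda>_. 0) z = 0"
  unfolding inner_on_def by simp

lemma inner_on_zero_right [simp]: "inner_on S z (\<lambda>_. 0) = 0"
  unfolding inner_on_def by simp

lemma inner_on_cong:
  "(\<And>s. s \<in> S \<Longrightarrow> x s = x' s) \<Longrightarrow> (\<And>s. s \<in> S \<Longrightarrow> y s = y' s) \<Longrightarrow> inner_on S x y = inner_on S x' y'"
  unfolding inner_on_def by auto

lemma inner_on_self_nonneg: "0 \<le> inner_on S x x"
  unfolding inner_on_def by (auto intro: sum_nonneg)

lemma inner_on_self_eq_0:
  assumes "finite S" "inner_on S x x = 0" "s \<in> S"
  shows "x s = 0"
proof -
  have "(\<Sum>s\<in>S. (x s)^2) = 0" using assms(2) unfolding inner_on_def by (simp add: power2_eq_square)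
  then show ?thesis using assms(1,3) by (simp add: sum_nonneg_eq_0_iff)
qed

lemma sq_le_inner_on_self:
  assumes "finite S" "c \<in> S"
  shows "(x c)^2 \<le> inner_on S x x"
proof -
  have "(x c)^2 = (\<Sum>s\<in>{c}. (x s)^2)" by simp
  also have "\<dots> \<le> (\<Sum>s\<in>S. (x s)^2)" using assms by (intro sum_mono2) auto
  finally show ?thesis unfolding inner_on_def by (simp add: power2_eq_square)
qed

lemma inner_on_expand:
  "inner_on S (\<lambda>s. a s + t * b s) (\<lambda>s. a s + t * b s) = inner_on S a a + 2 * t * inner_on S a b + t^2 * inner_on S b b"
  unfolding inner_on_def by (simp add: algebra_simps power2_eq_square sum.distrib sum_distrib_left)

lemma unit_vec_same [simp]: "unit_vec c c = 1"
  unfolding unit_vec_def by simp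

lemma inner_on_unit_vec:
  assumes "finite S" "c \<in> S"
  shows "inner_on S (unit_vec c) x = x c"
proof -
  have "inner_on S (unit_vec c) x = (\<Sum>s\<in>S. if s = c then x s else 0)"
    unfolding inner_on_def unit_vec_def by (rule sum.cong) auto
  then show ?thesis using assms by (simp add: sum.delta')
qed

lemma orthonormal_on_mono: "orthonormal_on S w m \<Longrightarrow> k \<le> m \<Longrightarrow> orthonormal_on S w k"
  unfolding orthonormal_on_def by auto

lemma orthonormal_on_extend:
  assumes "orthonormal_on S w k" "\<forall>d<k. inner_on S (w d) x = 0" "inner_on S x x = 1"
  shows "orthonormal_on S (w(k := x)) (Suc k)"
  using assms unfolding orthonormal_on_def by (auto simp: less_Suc_eq inner_on_commute[of S x "w _"])

lemma inner_on_orthonormal_sum: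
  assumes "orthonormal_on S w k" "d < k"
  shows "inner_on S (\<lambda>s. \<Sum>d'<k. c d' * w d' s) (w d) = c d"
proof -
  have "inner_on S (\<lambda>s. \<Sum>d'<k. c d' * w d' s) (w d) = (\<Sum>d'<k. c d' * inner_on S (w d') (w d))"
    by (simp add: inner_on_sum_left inner_on_scale_left)
  also have "\<dots> = (\<Sum>d'<k. c d' * (if d' = d then 1 else 0))"
    using assms unfolding orthonormal_on_def by (intro sum.cong) auto
  also have "\<dots> = c d" using assms(2) by (simp add: if_distrib cong: if_cong)
  finally show ?thesis .
qed

lemma inner_on_proj_on_basis:
  "orthonormal_on S w k \<Longrightarrow> d < k \<Longrightarrow> inner_on S (proj_on S w k x) (w d) = inner_on S x (w d)"
  unfolding proj_on_def by (rule inner_on_orthonormal_sum)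

lemma inner_on_proj_on_left: "inner_on S (proj_on S w k x) y = (\<Sum>d<k. inner_on S x (w d) * inner_on S (w d) y)"
  unfolding proj_on_def by (simp add: inner_on_sum_left inner_on_scale_left)

lemma inner_on_proj_on_proj_on:
  assumes "orthonormal_on S w k"
  shows "inner_on S (proj_on S w k x) (proj_on S w k y) = (\<Sum>d<k. inner_on S x (w d) * inner_on S y (w d))"
proof -
  have "inner_on S (proj_on S w k x) (proj_on S w k y) = (\<Sum>d<k. inner_on S y (w d) * inner_on S (w d) (proj_on S w k x))"
    by (subst inner_on_commute) (rule inner_on_proj_on_left)
  also have "\<dots> = (\<Sum>d<k. inner_on S y (w d) * inner_on S x (w d))"
    by (intro sum.cong refl)
      (simp add: inner_on_commute[of S "w _" "proj_on S w k x"] inner_on_proj_on_basis[OF assms])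
  finally show ?thesis by (simp add: mult.commute)
qed

lemma inner_on_residual_proj_on:
  assumes "orthonormal_on S w k"
  shows "inner_on S (\<lambda>s. x s - proj_on S w k x s) (proj_on S w k y) = 0"
proof -
  have "inner_on S x (proj_on S w k y) = (\<Sum>d<k. inner_on S y (w d) * inner_on S (w d) x)"
    by (subst inner_on_commute) (rule inner_on_proj_on_left)
  then show ?thesis
    unfolding inner_on_diff_left inner_on_proj_on_proj_on[OF assms]
    by (simp add: inner_on_commute[of S "w _" x] mult.commute)
qed

lemma inner_on_residual_self:
  assumes "orthonormal_on S w k"
  shows "inner_on S (\<lambda>s. x s - proj_on S w k x s) (\<lambda>s. x s - proj_on S w k x s)
       = inner_on S x x - (\<Sum>d<k. (inner_on S x (w d))^2)"
proof -
  have "inner_on S (proj_on S w k x) x = (\<Sum>d<k. (inner_on S x (w d))^2)"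
    unfolding inner_on_proj_on_left by (simp add: inner_on_commute[of S "w _" x] power2_eq_square)
  then show ?thesis
    unfolding inner_on_diff_left inner_on_diff_right inner_on_proj_on_proj_on[OF assms]
      inner_on_commute[of S x "proj_on S w k x"]
    by (simp add: power2_eq_square)
qed

lemma bessel_inequality:
  "orthonormal_on S w k \<Longrightarrow> (\<Sum>d<k. (inner_on S x (w d))^2) \<le> inner_on S x x"
  using inner_on_residual_self[of S w k x] inner_on_self_nonneg[of S "\<lambda>s. x s - proj_on S w k x s"]
  by linarith

text \<open>For the orthogonal projection \<open>P\<close> onto the span of \<open>w\<close>, the vector \<open>a - P b\<close> splits
  orthogonally into \<open>a - P a\<close> and \<open>P (a - b)\<close>, and \<open>P\<close> does not increase norms.\<close>
lemma proj_on_error_le: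
  assumes "orthonormal_on S w k"
  shows "inner_on S (\<lambda>s. a s - proj_on S w k b s) (\<lambda>s. a s - proj_on S w k b s)
     \<le> inner_on S (\<lambda>s. a s - proj_on S w k a s) (\<lambda>s. a s - proj_on S w k a s)
       + inner_on S (\<lambda>s. a s - b s) (\<lambda>s. a s - b s)"
proof -
  define r where "r = (\<lambda>s. a s - proj_on S w k a s)"
  define q where "q = proj_on S w k (\<lambda>s. a s - b s)"
  have split: "(\<lambda>s. a s - proj_on S w k b s) = (\<lambda>s. r s + 1 * q s)"
    unfolding r_def q_def proj_on_def by (auto simp: inner_on_diff_left left_diff_distrib sum_subtractf)
  have "inner_on S r q = 0"
    unfolding r_def q_def by (rule inner_on_residual_proj_on[OF assms])
  moreover have "inner_on S q q \<le> inner_on S (\<lambda>s. a s - b s) (\<lambda>s. a s - b s)"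
    unfolding q_def inner_on_proj_on_proj_on[OF assms] using bessel_inequality[OF assms]
    by (simp add: power2_eq_square)
  ultimately show ?thesis unfolding split inner_on_expand by (simp add: r_def)
qed

lemma sum_residual_unit_vec:
  assumes "finite S" "orthonormal_on S w k"
  shows "(\<Sum>c\<in>S. inner_on S (\<lambda>s. unit_vec c s - proj_on S w k (unit_vec c) s)
                            (\<lambda>s. unit_vec c s - proj_on S w k (unit_vec c) s)) = real (card S) - real k"
proof -
  have "(\<Sum>c\<in>S. inner_on S (\<lambda>s. unit_vec c s - proj_on S w k (unit_vec c) s)
                            (\<lambda>s. unit_vec c s - proj_on S w k (unit_vec c) s))
     = (\<Sum>c\<in>S. 1 - (\<Sum>d<k. (w d c)^2))"
    using assms by (intro sum.cong) (auto simp: inner_on_residual_self inner_on_unit_vec)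
  also have "\<dots> = real (card S) - (\<Sum>d<k. \<Sum>c\<in>S. (w d c)^2)"
    by (simp add: sum_subtractf sum.swap[of _ S])
  also have "(\<Sum>d<k. \<Sum>c\<in>S. (w d c)^2) = real k"
    using assms(2) unfolding orthonormal_on_def inner_on_def by (simp add: power2_eq_square)
  finally show ?thesis .
qed

text \<open>Gram--Schmidt applied to the unit vectors: since the residuals of the unit vectors have total
  squared norm \<open>card S - k > 0\<close>, one of them is nonzero.\<close>
lemma orthonormal_on_extension_exists:
  assumes "finite S" "orthonormal_on S w k" "k < card S"
  obtains x where "\<forall>d<k. inner_on S (w d) x = 0" "inner_on S x x = 1"
proof -
  define r where "r = (\<lambda>c s. unit_vec c s - proj_on S w k (unit_vec c) s)"
  have "(\<Sum>c\<in>S. inner_on S (r c) (r c)) \<noteq> 0"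
    using sum_residual_unit_vec[OF assms(1,2)] assms(3) unfolding r_def by simp
  then obtain c where "inner_on S (r c) (r c) \<noteq> 0" by (metis (mono_tags, lifting) sum.neutral)
  then have pos: "inner_on S (r c) (r c) > 0" using inner_on_self_nonneg[of S "r c"] by linarith
  define x where "x = (\<lambda>s. (1 / sqrt (inner_on S (r c) (r c))) * r c s)"
  have "inner_on S x x = 1"
    unfolding x_def inner_on_scale_left inner_on_scale_right using pos by (simp add: real_sqrt_mult[symmetric])
  moreover have "inner_on S (w d) x = 0" if "d < k" for d
    using inner_on_proj_on_basis[OF assms(2) that]
    unfolding x_def inner_on_scale_right r_def inner_on_commute[of S "w d"] inner_on_diff_left by simp
  ultimately show ?thesis using that by blast
qed

lemma orthonormal_on_complete:
  assumes "finite S" "orthonormal_on S w (card S)" "c \<in> S" "s \<in> S"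
  shows "(\<Sum>d<card S. w d c * w d s) = (if s = c then 1 else 0)"
proof -
  define r where "r = (\<lambda>c s. unit_vec c s - proj_on S w (card S) (unit_vec c) s)"
  have "(\<Sum>c\<in>S. inner_on S (r c) (r c)) = 0"
    using sum_residual_unit_vec[OF assms(1,2)] unfolding r_def by simp
  then have "inner_on S (r c) (r c) = 0"
    using assms(1,3) by (simp add: sum_nonneg_eq_0_iff inner_on_self_nonneg)
  then have "r c s = 0" using inner_on_self_eq_0[OF assms(1) _ assms(4)] by blast
  then have "unit_vec c s = (\<Sum>d<card S. inner_on S (unit_vec c) (w d) * w d s)"
    unfolding r_def proj_on_def by simp
  also have "\<dots> = (\<Sum>d<card S. w d c * w d s)" using assms(1,3) by (simp add: inner_on_unit_vec)
  finally show ?thesis by (simp add: unit_vec_def)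
qed

section \<open>Existence of the singular value decomposition\<close>

definition mat_vec :: "'c set \<Rightarrow> ('r \<Rightarrow> 'c \<Rightarrow> real) \<Rightarrow> ('c \<Rightarrow> real) \<Rightarrow> 'r \<Rightarrow> real" where
  "mat_vec Cs M x = (\<lambda>r. \<Sum>c\<in>Cs. M r c * x c)"

definition mat_tvec :: "'r set \<Rightarrow> ('r \<Rightarrow> 'c \<Rightarrow> real) \<Rightarrow> ('r \<Rightarrow> real) \<Rightarrow> 'c \<Rightarrow> real" where
  "mat_tvec Rs M y = (\<lambda>c. \<Sum>r\<in>Rs. M r c * y r)"

lemma inner_on_mat_vec: "inner_on Rs (mat_vec Cs M x) y = inner_on Cs x (mat_tvec Rs M y)"
proof -
  have "inner_on Rs (mat_vec Cs M x) y = (\<Sum>r\<in>Rs. \<Sum>c\<in>Cs. M r c * x c * y r)"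
    unfolding inner_on_def mat_vec_def by (simp add: sum_distrib_right)
  also have "\<dots> = (\<Sum>c\<in>Cs. \<Sum>r\<in>Rs. M r c * x c * y r)" by (rule sum.swap)
  also have "\<dots> = inner_on Cs x (mat_tvec Rs M y)"
    unfolding inner_on_def mat_tvec_def by (simp add: sum_distrib_left mult_ac)
  finally show ?thesis .
qed

lemma mat_vec_scale: "mat_vec Cs M (\<lambda>c. a * x c) = (\<lambda>r. a * mat_vec Cs M x r)"
  unfolding mat_vec_def by (simp add: sum_distrib_left mult.left_commute)

lemma mat_tvec_scale: "mat_tvec Rs M (\<lambda>r. a * y r) = (\<lambda>c. a * mat_tvec Rs M y c)"
  unfolding mat_tvec_def by (simp add: sum_distrib_left mult.left_commute)

lemma mat_vec_add_scaled: "mat_vec Cs M (\<lambda>c. x c + t * y c) = (\<lambda>r. mat_vec Cs M x r + t * mat_vec Cs M y r)"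
  unfolding mat_vec_def by (simp add: algebra_simps sum.distrib sum_distrib_left)

lemma mat_vec_cong: "(\<And>c. c \<in> Cs \<Longrightarrow> x c = x' c) \<Longrightarrow> mat_vec Cs M x = mat_vec Cs M x'"
  unfolding mat_vec_def by (auto intro!: sum.cong)

lemma mat_vec_unit_vec: "finite Cs \<Longrightarrow> c \<in> Cs \<Longrightarrow> mat_vec Cs M (unit_vec c) r = M r c"
  using inner_on_unit_vec[of Cs c "M r"] unfolding mat_vec_def inner_on_def by (simp add: mult.commute)

lemma mat_vec_rank_one_diff:
  "mat_vec Cs (\<lambda>r c. N r c - s * a r * b c) x r = mat_vec Cs N x r - s * a r * inner_on Cs b x"
  unfolding mat_vec_def inner_on_def by (simp add: algebra_simps sum_subtractf sum_distrib_left)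

lemma mat_tvec_rank_one_diff:
  "mat_tvec Rs (\<lambda>r c. N r c - s * a r * b c) y c = mat_tvec Rs N y c - s * b c * inner_on Rs a y"
  unfolding mat_tvec_def inner_on_def by (simp add: algebra_simps sum_subtractf sum_distrib_left)

lemma unit_sphere_argmax_exists:
  fixes g :: "('c \<Rightarrow> real) \<Rightarrow> real"
  assumes fin: "finite Cs" and ne: "Cs \<noteq> {}"
    and cont: "continuous_map (product_topology (\<lambda>_. euclideanreal) Cs) euclideanreal g"
  obtains v where "inner_on Cs v v = 1" "\<And>y. y \<in> extensional Cs \<Longrightarrow> inner_on Cs y y = 1 \<Longrightarrow> g y \<le> g v"
proof -
  define X where "X = product_topology (\<lambda>_. euclideanreal) Cs"
  define sphere where "sphere = {y \<in> topspace X. inner_on Cs y y \<in> {1}}"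
  have "continuous_map X euclideanreal (\<lambda>y. inner_on Cs y y)"
    unfolding X_def inner_on_def using fin by (intro continuous_intros) (auto intro: continuous_intros)
  then have "closedin X sphere"
    unfolding sphere_def by (rule closedin_continuous_map_preimage) auto
  moreover have "compactin X (PiE Cs (\<lambda>_. {-1..1}))"
    unfolding X_def by (subst compactin_PiE) auto
  moreover have "sphere \<subseteq> PiE Cs (\<lambda>_. {-1..1})"
  proof
    fix y assume y: "y \<in> sphere"
    have "\<bar>y c\<bar> \<le> 1" if "c \<in> Cs" for c
      using sq_le_inner_on_self[OF fin that, of y] y abs_le_square_iff[of "y c" 1]
      unfolding sphere_def by simp
    then show "y \<in> PiE Cs (\<lambda>_. {-1..1})" using y unfolding sphere_def X_def by (auto simp: PiE_iff abs_le_iff)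
  qed
  ultimately have "compactin X sphere"
    using closed_Int_compactin[of X sphere "PiE Cs (\<lambda>_. {-1..1})"] by (simp add: Int_absorb2)
  then have "compact (g ` sphere)" using image_compactin[OF _ cont] unfolding X_def by simp
  moreover obtain c0 where c0: "c0 \<in> Cs" using ne by blast
  then have "restrict (unit_vec c0) Cs \<in> sphere"
    using inner_on_unit_vec[OF fin c0, of "unit_vec c0"]
    unfolding sphere_def X_def by (simp add: inner_on_def)
  ultimately obtain v where v: "v \<in> sphere" "\<forall>y\<in>sphere. g y \<le> g v"
    using compact_attains_sup[of "g ` sphere"] by blast
  show ?thesis
    using that[of v] v unfolding sphere_def X_def by (auto simp: PiE_def)
qed

lemma max_stretch_exists:
  fixes M :: "'r \<Rightarrow> 'c \<Rightarrow> real"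
  assumes finR: "finite Rs" and finC: "finite Cs" and ne: "Cs \<noteq> {}"
  obtains v where "inner_on Cs v v = 1"
    "\<And>x. inner_on Rs (mat_vec Cs M x) (mat_vec Cs M x)
          \<le> inner_on Rs (mat_vec Cs M v) (mat_vec Cs M v) * inner_on Cs x x"
proof -
  define g where "g = (\<lambda>x. inner_on Rs (mat_vec Cs M x) (mat_vec Cs M x))"
  have "continuous_map (product_topology (\<lambda>_. euclideanreal) Cs) euclideanreal g"
    unfolding g_def inner_on_def mat_vec_def using finC finR
    by (intro continuous_intros) (auto intro: continuous_intros)
  then obtain v where v1: "inner_on Cs v v = 1"
    and vmax: "\<And>y. y \<in> extensional Cs \<Longrightarrow> inner_on Cs y y = 1 \<Longrightarrow> g y \<le> g v"
    using unit_sphere_argmax_exists[OF finC ne] by blast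
  have "g x \<le> g v * inner_on Cs x x" for x
  proof (cases "inner_on Cs x x = 0")
    case True
    then have "mat_vec Cs M x = mat_vec Cs M (\<lambda>_. 0)"
      using inner_on_self_eq_0[OF finC] by (intro mat_vec_cong) blast
    then have "g x = 0" unfolding g_def by (simp add: mat_vec_def)
    then show ?thesis using True by simp
  next
    case False
    then have pos: "inner_on Cs x x > 0" using inner_on_self_nonneg[of Cs x] by linarith
    define a where "a = 1 / sqrt (inner_on Cs x x)"
    have aa: "a * a * inner_on Cs x x = 1" unfolding a_def using pos by (simp add: real_sqrt_mult[symmetric])
    define y where "y = restrict (\<lambda>c. a * x c) Cs"
    have "inner_on Cs y y = a * a * inner_on Cs x x"
      unfolding y_def by (simp add: inner_on_def sum_distrib_left mult_ac)
    then have "g y \<le> g v" using vmax aa unfolding y_def by simp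
    moreover have "g y = a * a * g x"
      unfolding g_def y_def mat_vec_cong[of Cs "restrict (\<lambda>c. a * x c) Cs" "\<lambda>c. a * x c", simplified]
        mat_vec_scale inner_on_scale_left inner_on_scale_right by simp
    ultimately have "a * a * g x * inner_on Cs x x \<le> g v * inner_on Cs x x"
      using pos by (simp add: mult_right_mono)
    then show ?thesis using aa by (metis mult.assoc mult.commute mult.left_neutral)
  qed
  then show ?thesis using that v1 unfolding g_def by blast
qed

lemma nonneg_perturbation_eq_0:
  fixes l q G :: real
  assumes "0 \<le> l" "0 \<le> q" "0 \<le> G"
    and "\<And>t. 0 < t \<Longrightarrow> l + 2 * t * q + t^2 * G \<le> l * (1 + t^2 * q)"
  shows "q = 0"
proof -
  define t where "t = 1 / (l + 1)"
  have t: "0 < t" "l * t < 1" unfolding t_def using assms(1) by (auto simp: field_simps)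
  have "t * (2 * q) \<le> t * ((l * t) * q)"
    using assms(4)[OF t(1)] assms(3) t(1) by (simp add: algebra_simps power2_eq_square)
      (smt (verit) mult_nonneg_nonneg zero_le_power2)
  then have "2 * q \<le> (l * t) * q" using t(1) by simp
  moreover have "(l * t) * q \<le> 1 * q" using t(2) assms(2) by (intro mult_right_mono) auto
  ultimately show ?thesis using assms(2) by linarith
qed

text \<open>A maximiser of the stretch is an eigenvector of \<open>M\<^sup>T M\<close>: otherwise perturbing it along the
  component \<open>w\<close> of \<open>M\<^sup>T M v\<close> orthogonal to \<open>v\<close> would increase the stretch to first order.\<close>
lemma max_stretch_eigenvector:
  fixes M :: "'r \<Rightarrow> 'c \<Rightarrow> real"
  assumes fin: "finite Cs" and v1: "inner_on Cs v v = 1"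
    and vmax: "\<And>x. inner_on Rs (mat_vec Cs M x) (mat_vec Cs M x)
                   \<le> inner_on Rs (mat_vec Cs M v) (mat_vec Cs M v) * inner_on Cs x x"
    and c: "c \<in> Cs"
  shows "mat_tvec Rs M (mat_vec Cs M v) c = inner_on Rs (mat_vec Cs M v) (mat_vec Cs M v) * v c"
proof -
  define g where "g = (\<lambda>x. inner_on Rs (mat_vec Cs M x) (mat_vec Cs M x))"
  define l where "l = g v"
  define w where "w = (\<lambda>c. mat_tvec Rs M (mat_vec Cs M v) c - l * v c)"
  have vw: "inner_on Cs v w = 0"
    unfolding w_def inner_on_diff_right inner_on_scale_right v1 inner_on_mat_vec[symmetric]
    by (simp add: l_def g_def)
  have "inner_on Rs (mat_vec Cs M v) (mat_vec Cs M w) = inner_on Cs w (\<lambda>c. w c + l * v c)"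
    by (subst inner_on_commute, unfold inner_on_mat_vec) (rule inner_on_cong, auto simp: w_def)
  also have "\<dots> = inner_on Cs w w"
    unfolding inner_on_add_right inner_on_scale_right using vw by (simp add: inner_on_commute)
  finally have Mvw: "inner_on Rs (mat_vec Cs M v) (mat_vec Cs M w) = inner_on Cs w w" .
  have "inner_on Cs w w = 0"
  proof (rule nonneg_perturbation_eq_0)
    fix t :: real
    have "g (\<lambda>c. v c + t * w c) \<le> l * inner_on Cs (\<lambda>c. v c + t * w c) (\<lambda>c. v c + t * w c)"
      using vmax unfolding g_def l_def by blast
    then show "l + 2 * t * inner_on Cs w w + t^2 * g w \<le> l * (1 + t^2 * inner_on Cs w w)"
      unfolding g_def mat_vec_add_scaled inner_on_expand Mvw using v1 vw by (simp add: l_def g_def)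
  qed (auto simp: l_def g_def inner_on_self_nonneg)
  then have "w c = 0" using inner_on_self_eq_0[OF fin _ c] by blast
  then show ?thesis unfolding w_def l_def g_def by simp
qed

definition svd_residual ::
    "('r \<Rightarrow> 'c \<Rightarrow> real) \<Rightarrow> (nat \<Rightarrow> real) \<Rightarrow> (nat \<Rightarrow> 'r \<Rightarrow> real) \<Rightarrow> (nat \<Rightarrow> 'c \<Rightarrow> real) \<Rightarrow> nat \<Rightarrow> 'r \<Rightarrow> 'c \<Rightarrow> real" where
  "svd_residual M \<sigma> u v k = (\<lambda>r c. M r c - (\<Sum>d<k. \<sigma> d * u d r * v d c))"

definition top_singular_triple ::
    "'r set \<Rightarrow> 'c set \<Rightarrow> ('r \<Rightarrow> 'c \<Rightarrow> real) \<Rightarrow> real \<Rightarrow> ('r \<Rightarrow> real) \<Rightarrow> ('c \<Rightarrow> real) \<Rightarrow> bool" where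
  "top_singular_triple Rs Cs N s a b \<longleftrightarrow>
     0 \<le> s \<and> inner_on Rs a a = 1 \<and> inner_on Cs b b = 1 \<and>
     (\<forall>r\<in>Rs. mat_vec Cs N b r = s * a r) \<and> (\<forall>c\<in>Cs. mat_tvec Rs N a c = s * b c) \<and>
     (\<forall>x. inner_on Rs (mat_vec Cs N x) (mat_vec Cs N x) \<le> s^2 * inner_on Cs x x)"

text \<open>The state after \<open>k\<close> steps of the greedy construction of an SVD.\<close>
definition partial_svd ::
    "'r set \<Rightarrow> 'c set \<Rightarrow> ('r \<Rightarrow> 'c \<Rightarrow> real) \<Rightarrow> nat \<Rightarrow> (nat \<Rightarrow> real) \<Rightarrow> (nat \<Rightarrow> 'r \<Rightarrow> real) \<Rightarrow> (nat \<Rightarrow> 'c \<Rightarrow> real) \<Rightarrow> bool" where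
  "partial_svd Rs Cs M k \<sigma> u v \<longleftrightarrow>
     (\<forall>d<k. 0 \<le> \<sigma> d) \<and> (\<forall>d. Suc d < k \<longrightarrow> \<sigma> (Suc d) \<le> \<sigma> d) \<and>
     orthonormal_on Rs u k \<and> orthonormal_on Cs v k \<and>
     (\<forall>d<k. \<forall>c\<in>Cs. mat_tvec Rs (svd_residual M \<sigma> u v k) (u d) c = 0) \<and>
     (\<forall>d<k. \<forall>r\<in>Rs. mat_vec Cs (svd_residual M \<sigma> u v k) (v d) r = 0) \<and>
     (0 < k \<longrightarrow> (\<forall>x. inner_on Rs (mat_vec Cs (svd_residual M \<sigma> u v k) x) (mat_vec Cs (svd_residual M \<sigma> u v k) x)
                     \<le> (\<sigma> (k - 1))^2 * inner_on Cs x x))"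

lemma svd_residual_Suc:
  "svd_residual M (\<sigma>(k := s)) (u(k := a)) (v(k := b)) (Suc k) = (\<lambda>r c. svd_residual M \<sigma> u v k r c - s * a r * b c)"
proof -
  have "(\<Sum>d<k. (\<sigma>(k := s)) d * (u(k := a)) d r * (v(k := b)) d c) = (\<Sum>d<k. \<sigma> d * u d r * v d c)" for r c
    by (intro sum.cong) auto
  then show ?thesis unfolding svd_residual_def by (simp add: fun_eq_iff)
qed

lemma top_singular_triple_exists:
  fixes N :: "'r \<Rightarrow> 'c \<Rightarrow> real"
  assumes finR: "finite Rs" and finC: "finite Cs" and ne: "Cs \<noteq> {}"
  obtains s a b where "top_singular_triple Rs Cs N s a b" "0 < s"
    | "\<forall>r\<in>Rs. \<forall>c\<in>Cs. N r c = 0"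
proof -
  define g where "g = (\<lambda>x. inner_on Rs (mat_vec Cs N x) (mat_vec Cs N x))"
  obtain b where b1: "inner_on Cs b b = 1" and bmax: "\<And>x. g x \<le> g b * inner_on Cs x x"
    using max_stretch_exists[OF finR finC ne, of N] unfolding g_def by blast
  have g0: "0 \<le> g x" for x unfolding g_def by (rule inner_on_self_nonneg)
  show ?thesis
  proof (cases "g b = 0")
    case True
    have "N r c = 0" if r: "r \<in> Rs" and c: "c \<in> Cs" for r c
    proof -
      have "g (unit_vec c) = 0" using bmax[of "unit_vec c"] True g0[of "unit_vec c"] by simp
      then have "mat_vec Cs N (unit_vec c) r = 0" using inner_on_self_eq_0[OF finR _ r] unfolding g_def by blast
      then show ?thesis using mat_vec_unit_vec[OF finC c, of N r] by simp
    qed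
    then show ?thesis using that(2) by blast
  next
    case False
    define s where "s = sqrt (g b)"
    have s: "0 < s" "s^2 = g b" unfolding s_def using False g0[of b] by auto
    define a where "a = (\<lambda>r. (1 / s) * mat_vec Cs N b r)"
    have "inner_on Rs a a = 1"
      unfolding a_def inner_on_scale_left inner_on_scale_right using s False by (simp add: g_def power2_eq_square)
    moreover have "mat_vec Cs N b r = s * a r" for r unfolding a_def using s by simp
    moreover have "mat_tvec Rs N a c = s * b c" if "c \<in> Cs" for c
    proof -
      have "mat_tvec Rs N a c = (1 / s) * mat_tvec Rs N (mat_vec Cs N b) c"
        unfolding a_def mat_tvec_scale ..
      also have "\<dots> = (1 / s) * (s^2 * b c)"
        using max_stretch_eigenvector[OF finC b1 bmax[unfolded g_def] that] s(2) by (simp add: g_def)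
      finally show ?thesis using s(1) by (simp add: power2_eq_square)
    qed
    moreover have "g x \<le> s^2 * inner_on Cs x x" for x using bmax s by simp
    ultimately have "top_singular_triple Rs Cs N s a b"
      unfolding top_singular_triple_def g_def using s b1 by simp
    then show ?thesis using that(1) s by blast
  qed
qed

lemma rank_one_deflation_norm_le:
  assumes "\<forall>c\<in>Cs. mat_tvec Rs (\<lambda>r c. N r c - s * a r * b c) a c = 0" "inner_on Rs a a = 1"
    and "inner_on Rs (mat_vec Cs N x) (mat_vec Cs N x) \<le> B"
  shows "inner_on Rs (mat_vec Cs (\<lambda>r c. N r c - s * a r * b c) x) (mat_vec Cs (\<lambda>r c. N r c - s * a r * b c) x) \<le> B"
proof -
  define N' where "N' = (\<lambda>r c. N r c - s * a r * b c)"
  define \<beta> where "\<beta> = s * inner_on Cs b x"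
  have split: "mat_vec Cs N x = (\<lambda>r. mat_vec Cs N' x r + \<beta> * a r)"
    unfolding N'_def mat_vec_rank_one_diff \<beta>_def by auto
  have "inner_on Rs (mat_vec Cs N' x) a = inner_on Cs x (\<lambda>_. 0)"
    unfolding inner_on_mat_vec using assms(1) unfolding N'_def by (intro inner_on_cong) auto
  then have "inner_on Rs (mat_vec Cs N x) (mat_vec Cs N x) = inner_on Rs (mat_vec Cs N' x) (mat_vec Cs N' x) + \<beta>^2"
    unfolding split inner_on_expand assms(2) by (simp add: inner_on_commute[of Cs x])
  then show ?thesis using assms(3) unfolding N'_def by (smt (verit) zero_le_power2)
qed

lemma top_singular_value_le:
  assumes inv: "partial_svd Rs Cs M k \<sigma> u v"
    and triple: "top_singular_triple Rs Cs (svd_residual M \<sigma> u v k) s a b" and k: "0 < k"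
  shows "s \<le> \<sigma> (k - 1)"
proof -
  define N where "N = svd_residual M \<sigma> u v k"
  have Nb: "\<forall>r\<in>Rs. mat_vec Cs N b r = s * a r" and aa: "inner_on Rs a a = 1"
    using triple unfolding top_singular_triple_def N_def by auto
  have "inner_on Rs (mat_vec Cs N b) (mat_vec Cs N b) = s^2"
    using Nb aa by (simp add: inner_on_cong[of Rs "mat_vec Cs N b" "\<lambda>r. s * a r"] inner_on_scale_left
        inner_on_scale_right power2_eq_square)
  moreover have "inner_on Rs (mat_vec Cs N b) (mat_vec Cs N b) \<le> (\<sigma> (k - 1))^2 * inner_on Cs b b"
    and "0 \<le> \<sigma> (k - 1)"
    using inv k unfolding partial_svd_def N_def by auto
  ultimately show ?thesis
    using triple unfolding top_singular_triple_def by (simp add: power2_le_iff_abs_le)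
qed

text \<open>Being images of \<open>N\<close> and \<open>N\<^sup>T\<close>, the vectors \<open>a\<close> and \<open>b\<close> of a triple with \<open>s > 0\<close> inherit
  orthogonality from the invariant.\<close>
lemma top_singular_triple_orthogonal:
  assumes inv: "partial_svd Rs Cs M k \<sigma> u v"
    and triple: "top_singular_triple Rs Cs (svd_residual M \<sigma> u v k) s a b" and s: "0 < s"
  shows "\<forall>d<k. inner_on Rs (u d) a = 0" "\<forall>d<k. inner_on Cs (v d) b = 0"
proof -
  define N where "N = svd_residual M \<sigma> u v k"
  have N_u: "\<forall>d<k. \<forall>c\<in>Cs. mat_tvec Rs N (u d) c = 0" and N_v: "\<forall>d<k. \<forall>r\<in>Rs. mat_vec Cs N (v d) r = 0"
    using inv unfolding partial_svd_def N_def by auto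
  have Nb: "\<forall>r\<in>Rs. mat_vec Cs N b r = s * a r" and Na: "\<forall>c\<in>Cs. mat_tvec Rs N a c = s * b c"
    using triple unfolding top_singular_triple_def N_def by auto
  have "s * inner_on Rs (u d) a = 0" if d: "d < k" for d
  proof -
    have "s * inner_on Rs (u d) a = inner_on Rs (u d) (mat_vec Cs N b)"
      unfolding inner_on_scale_right[symmetric] using Nb by (intro inner_on_cong) auto
    also have "\<dots> = inner_on Cs b (mat_tvec Rs N (u d))"
      by (simp add: inner_on_commute[of Rs "u d"] inner_on_mat_vec)
    also have "\<dots> = inner_on Cs b (\<lambda>_. 0)" using N_u d by (intro inner_on_cong) auto
    finally show ?thesis by simp
  qed
  moreover have "s * inner_on Cs (v d) b = 0" if d: "d < k" for d
  proof -
    have "s * inner_on Cs (v d) b = inner_on Cs (v d) (mat_tvec Rs N a)"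
      unfolding inner_on_scale_right[symmetric] using Na by (intro inner_on_cong) auto
    also have "\<dots> = inner_on Rs (mat_vec Cs N (v d)) a" by (simp add: inner_on_mat_vec)
    also have "\<dots> = inner_on Rs (\<lambda>_. 0) a" using N_v d by (intro inner_on_cong) auto
    finally show ?thesis by simp
  qed
  ultimately show "\<forall>d<k. inner_on Rs (u d) a = 0" "\<forall>d<k. inner_on Cs (v d) b = 0" using s by auto
qed

lemma svd_residual_Suc_annihilates:
  assumes inv: "partial_svd Rs Cs M k \<sigma> u v"
    and triple: "top_singular_triple Rs Cs (svd_residual M \<sigma> u v k) s a b"
    and ua: "\<forall>d<k. inner_on Rs (u d) a = 0" and vb: "\<forall>d<k. inner_on Cs (v d) b = 0"
  defines "N' \<equiv> svd_residual M (\<sigma>(k := s)) (u(k := a)) (v(k := b)) (Suc k)"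
  shows "\<forall>d<Suc k. \<forall>c\<in>Cs. mat_tvec Rs N' ((u(k := a)) d) c = 0"
    and "\<forall>d<Suc k. \<forall>r\<in>Rs. mat_vec Cs N' ((v(k := b)) d) r = 0"
proof -
  define N where "N = svd_residual M \<sigma> u v k"
  have N': "N' = (\<lambda>r c. N r c - s * a r * b c)" unfolding N'_def N_def svd_residual_Suc ..
  have N_u: "\<forall>d<k. \<forall>c\<in>Cs. mat_tvec Rs N (u d) c = 0" and N_v: "\<forall>d<k. \<forall>r\<in>Rs. mat_vec Cs N (v d) r = 0"
    using inv unfolding partial_svd_def N_def by auto
  have aa: "inner_on Rs a a = 1" and bb: "inner_on Cs b b = 1"
    and Nb: "\<forall>r\<in>Rs. mat_vec Cs N b r = s * a r" and Na: "\<forall>c\<in>Cs. mat_tvec Rs N a c = s * b c"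
    using triple unfolding top_singular_triple_def N_def by auto
  show "\<forall>d<Suc k. \<forall>c\<in>Cs. mat_tvec Rs N' ((u(k := a)) d) c = 0"
  proof (intro allI impI ballI)
    fix d c assume d: "d < Suc k" and c: "c \<in> Cs"
    show "mat_tvec Rs N' ((u(k := a)) d) c = 0"
    proof (cases "d = k")
      case True
      then show ?thesis using Na c aa by (simp add: N' mat_tvec_rank_one_diff)
    next
      case False
      then show ?thesis using N_u ua d c by (simp add: N' mat_tvec_rank_one_diff inner_on_commute[of Rs a])
    qed
  qed
  show "\<forall>d<Suc k. \<forall>r\<in>Rs. mat_vec Cs N' ((v(k := b)) d) r = 0"
  proof (intro allI impI ballI)
    fix d r assume d: "d < Suc k" and r: "r \<in> Rs"
    show "mat_vec Cs N' ((v(k := b)) d) r = 0"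
    proof (cases "d = k")
      case True
      then show ?thesis using Nb r bb by (simp add: N' mat_vec_rank_one_diff)
    next
      case False
      then show ?thesis using N_v vb d r by (simp add: N' mat_vec_rank_one_diff inner_on_commute[of Cs b])
    qed
  qed
qed

lemma nonincreasing_fun_upd:
  assumes "\<forall>d. Suc d < k \<longrightarrow> \<sigma> (Suc d) \<le> \<sigma> d" and "0 < k \<Longrightarrow> s \<le> \<sigma> (k - 1)"
  shows "\<forall>d. Suc d < Suc k \<longrightarrow> (\<sigma>(k := s)) (Suc d) \<le> (\<sigma>(k := s)) d"
proof (intro allI impI)
  fix d assume "Suc d < Suc k"
  then consider "Suc d < k" | "Suc d = k" by linarith
  then show "(\<sigma>(k := s)) (Suc d) \<le> (\<sigma>(k := s)) d" using assms by cases auto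
qed

lemma partial_svd_Suc:
  assumes inv: "partial_svd Rs Cs M k \<sigma> u v"
    and triple: "top_singular_triple Rs Cs (svd_residual M \<sigma> u v k) s a b"
    and ua: "\<forall>d<k. inner_on Rs (u d) a = 0" and vb: "\<forall>d<k. inner_on Cs (v d) b = 0"
  shows "partial_svd Rs Cs M (Suc k) (\<sigma>(k := s)) (u(k := a)) (v(k := b))"
proof -
  define N where "N = svd_residual M \<sigma> u v k"
  have ou: "orthonormal_on Rs u k" and ov: "orthonormal_on Cs v k"
    and \<sigma>_nonneg: "\<forall>d<k. 0 \<le> \<sigma> d" and \<sigma>_sorted: "\<forall>d. Suc d < k \<longrightarrow> \<sigma> (Suc d) \<le> \<sigma> d"
    using inv unfolding partial_svd_def by auto
  have s0: "0 \<le> s" and aa: "inner_on Rs a a = 1" and bb: "inner_on Cs b b = 1"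
    and Nmax: "\<forall>x. inner_on Rs (mat_vec Cs N x) (mat_vec Cs N x) \<le> s^2 * inner_on Cs x x"
    using triple unfolding top_singular_triple_def N_def by auto
  note annihilates = svd_residual_Suc_annihilates[OF inv triple ua vb]
  have "inner_on Rs (mat_vec Cs (\<lambda>r c. N r c - s * a r * b c) x) (mat_vec Cs (\<lambda>r c. N r c - s * a r * b c) x)
      \<le> s^2 * inner_on Cs x x" for x
    using annihilates(1)[rule_format, of k] aa Nmax
    by (intro rank_one_deflation_norm_le) (auto simp: svd_residual_Suc N_def)
  moreover have "orthonormal_on Rs (u(k := a)) (Suc k)" "orthonormal_on Cs (v(k := b)) (Suc k)"
    using orthonormal_on_extend[OF ou ua aa] orthonormal_on_extend[OF ov vb bb] by auto
  moreover have "\<forall>d<Suc k. 0 \<le> (\<sigma>(k := s)) d" using \<sigma>_nonneg s0 by (simp add: less_Suc_eq)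
  moreover have "\<forall>d. Suc d < Suc k \<longrightarrow> (\<sigma>(k := s)) (Suc d) \<le> (\<sigma>(k := s)) d"
    using nonincreasing_fun_upd[OF \<sigma>_sorted top_singular_value_le[OF inv triple]] .
  ultimately show ?thesis
    using annihilates unfolding partial_svd_def svd_residual_Suc N_def[symmetric] by auto
qed

lemma partial_svd_extends:
  assumes finR: "finite Rs" and finC: "finite Cs" and k: "k < card Rs" "k < card Cs"
    and inv: "partial_svd Rs Cs M k \<sigma> u v"
  shows "\<exists>\<sigma>' u' v'. partial_svd Rs Cs M (Suc k) \<sigma>' u' v'"
proof -
  define N where "N = svd_residual M \<sigma> u v k"
  have ou: "orthonormal_on Rs u k" and ov: "orthonormal_on Cs v k"
    using inv unfolding partial_svd_def by auto
  have "Cs \<noteq> {}" using k by auto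
  then consider s a b where "top_singular_triple Rs Cs N s a b" "0 < s" | "\<forall>r\<in>Rs. \<forall>c\<in>Cs. N r c = 0"
    using top_singular_triple_exists[OF finR finC] by metis
  then show ?thesis
  proof cases
    case (1 s a b)
    note triple = 1(1)[unfolded N_def]
    show ?thesis using partial_svd_Suc[OF inv triple top_singular_triple_orthogonal[OF inv triple 1(2)]] by blast
  next
    case 2
    obtain a where ua: "\<forall>d<k. inner_on Rs (u d) a = 0" and aa: "inner_on Rs a a = 1"
      using orthonormal_on_extension_exists[OF finR ou k(1)] by blast
    obtain b where vb: "\<forall>d<k. inner_on Cs (v d) b = 0" and bb: "inner_on Cs b b = 1"
      using orthonormal_on_extension_exists[OF finC ov k(2)] by blast
    have "top_singular_triple Rs Cs N 0 a b"
      using 2 aa bb unfolding top_singular_triple_def mat_vec_def mat_tvec_def by (simp add: inner_on_def)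
    then show ?thesis using partial_svd_Suc[OF inv _ ua vb] unfolding N_def by blast
  qed
qed

lemma partial_svd_exists:
  assumes finR: "finite Rs" and finC: "finite Cs" and "k \<le> min (card Rs) (card Cs)"
  shows "\<exists>\<sigma> u v. partial_svd Rs Cs M k \<sigma> u v"
  using assms(3)
proof (induction k)
  case 0
  show ?case unfolding partial_svd_def orthonormal_on_def by auto
next
  case (Suc k)
  then obtain \<sigma> u v where "partial_svd Rs Cs M k \<sigma> u v" by auto
  moreover have "k < card Rs" "k < card Cs" using Suc.prems by auto
  ultimately show ?case using partial_svd_extends[OF finR finC] by blast
qed

text \<open>After \<open>min (card Rs) (card Cs)\<close> steps one of the two orthonormal families is a basis, so the
  residual vanishes.\<close>
lemma is_svd_of_partial_svd:
  assumes finR: "finite Rs" and finC: "finite Cs"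
    and inv: "partial_svd Rs Cs M (min (card Rs) (card Cs)) \<sigma> u v"
  shows "is_svd Rs Cs M \<sigma> u v"
proof -
  define m where "m = min (card Rs) (card Cs)"
  define N where "N = svd_residual M \<sigma> u v m"
  have N_u: "\<forall>d<m. \<forall>c\<in>Cs. mat_tvec Rs N (u d) c = 0" and N_v: "\<forall>d<m. \<forall>r\<in>Rs. mat_vec Cs N (v d) r = 0"
    and ou: "orthonormal_on Rs u m" and ov: "orthonormal_on Cs v m"
    using inv unfolding partial_svd_def N_def m_def by auto
  have "N r c = 0" if r: "r \<in> Rs" and c: "c \<in> Cs" for r c
  proof (cases "m = card Cs")
    case True
    have "N r c = (\<Sum>c'\<in>Cs. N r c' * (if c = c' then 1 else 0))"
      using finC c by (simp add: if_distrib sum.delta cong: if_cong)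
    also have "\<dots> = (\<Sum>c'\<in>Cs. N r c' * (\<Sum>d<m. v d c' * v d c))"
      using orthonormal_on_complete[OF finC, of v] ov True c by (intro sum.cong) auto
    also have "\<dots> = (\<Sum>d<m. v d c * mat_vec Cs N (v d) r)"
      unfolding mat_vec_def by (simp add: sum_distrib_left sum_distrib_right sum.swap[of _ Cs] mult_ac)
    finally show ?thesis using N_v r by simp
  next
    case False
    then have mR: "m = card Rs" unfolding m_def by linarith
    have "N r c = (\<Sum>r'\<in>Rs. N r' c * (if r = r' then 1 else 0))"
      using finR r by (simp add: if_distrib sum.delta cong: if_cong)
    also have "\<dots> = (\<Sum>r'\<in>Rs. N r' c * (\<Sum>d<m. u d r' * u d r))"
      using orthonormal_on_complete[OF finR, of u] ou mR r by (intro sum.cong) auto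
    also have "\<dots> = (\<Sum>d<m. u d r * mat_tvec Rs N (u d) c)"
      unfolding mat_tvec_def by (simp add: sum_distrib_left sum_distrib_right sum.swap[of _ Rs] mult_ac)
    finally show ?thesis using N_u c by simp
  qed
  then show ?thesis
    using inv unfolding is_svd_def Let_def m_def[symmetric] partial_svd_def orthonormal_on_def inner_on_def
    by (auto simp: N_def svd_residual_def)
qed

lemma svd_exists: "finite Rs \<Longrightarrow> finite Cs \<Longrightarrow> \<exists>\<sigma> u v. is_svd Rs Cs M \<sigma> u v"
  using partial_svd_exists[of Rs Cs "min (card Rs) (card Cs)" M] is_svd_of_partial_svd by blast

section \<open>Entanglement entropy and the tail of the spectrum\<close>

definition spectral_entropy :: "(nat \<Rightarrow> real) \<Rightarrow> nat \<Rightarrow> real" where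
  "spectral_entropy \<sigma> m =
     (let S = (\<Sum>d<m. (\<sigma> d)^2) in if S = 0 then 0 else - (\<Sum>d<m. ((\<sigma> d)^2 / S) * ln ((\<sigma> d)^2 / S)))"

lemma QE_eq_spectral_entropy:
  "QE D N A K = spectral_entropy (sing_vals (tidx D K) (tidx D ({1..N} - K)) (matricize A K))
                                 (min (card (tidx D K)) (card (tidx D ({1..N} - K))))"
  unfolding QE_def spectral_entropy_def Let_def ..

lemma nonincreasing_below:
  fixes \<sigma> :: "nat \<Rightarrow> 'a::order"
  assumes sorted: "\<forall>d. Suc d < m \<longrightarrow> \<sigma> (Suc d) \<le> \<sigma> d" and "j \<le> d" "d < m"
  shows "\<sigma> d \<le> \<sigma> j"
proof -
  have "d < m \<longrightarrow> \<sigma> d \<le> \<sigma> j" using \<open>j \<le> d\<close>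
  proof (induction d rule: dec_induct)
    case (step n)
    then show ?case using sorted by (meson Suc_lessD order_trans)
  qed simp
  then show ?thesis using \<open>d < m\<close> by simp
qed

lemma nonincreasing_distribution_le:
  fixes \<rho> :: "nat \<Rightarrow> real"
  assumes nonneg: "\<And>d. d < m \<Longrightarrow> 0 \<le> \<rho> d" and anti: "\<And>j d. j \<le> d \<Longrightarrow> d < m \<Longrightarrow> \<rho> d \<le> \<rho> j"
    and sum1: "(\<Sum>d<m. \<rho> d) = 1" and d: "d < m"
  shows "real (Suc d) * \<rho> d \<le> 1"
proof -
  have "real (Suc d) * \<rho> d = (\<Sum>j<Suc d. \<rho> d)" by simp
  also have "\<dots> \<le> (\<Sum>j<Suc d. \<rho> j)" using anti d by (intro sum_mono) auto
  also have "\<dots> \<le> (\<Sum>j<m. \<rho> j)" using d nonneg by (intro sum_mono2) auto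
  finally show ?thesis using sum1 by simp
qed

lemma mult_ln_le_neg_entropy_term:
  fixes p c :: real
  assumes "0 < p" "0 < c" "p * c \<le> 1"
  shows "p * ln c \<le> - (p * ln p)"
proof -
  have "ln p + ln c = ln (p * c)" using assms by (simp add: ln_mult)
  also have "\<dots> \<le> 0" using assms by simp
  finally have "p * (ln p + ln c) \<le> 0" using assms(1) by (simp add: mult_nonneg_nonpos)
  then show ?thesis by (simp add: algebra_simps)
qed

text \<open>A nonincreasing probability vector has \<open>\<rho>\<^sub>d \<le> 1/(d+1)\<close>, so each term of the entropy with
  \<open>d \<ge> R\<close> is at least \<open>\<rho>\<^sub>d ln (R+1)\<close>, while all other terms are nonnegative.\<close>
lemma tail_mass_le_entropy:
  fixes \<sigma> :: "nat \<Rightarrow> real"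
  assumes nonneg: "\<forall>d<m. 0 \<le> \<sigma> d" and sorted: "\<forall>d. Suc d < m \<longrightarrow> \<sigma> (Suc d) \<le> \<sigma> d"
    and S: "S = (\<Sum>d<m. (\<sigma> d)^2)" "0 < S"
  shows "(\<Sum>d\<in>{R..<m}. (\<sigma> d)^2 / S) * ln (real R + 1) \<le> - (\<Sum>d<m. ((\<sigma> d)^2 / S) * ln ((\<sigma> d)^2 / S))"
proof -
  define \<rho> where "\<rho> = (\<lambda>d. (\<sigma> d)^2 / S)"
  have \<rho>0: "0 \<le> \<rho> d" for d unfolding \<rho>_def using S by simp
  have sum1: "(\<Sum>d<m. \<rho> d) = 1" unfolding \<rho>_def using S by (simp add: sum_divide_distrib[symmetric])
  have anti: "\<rho> d \<le> \<rho> j" if "j \<le> d" "d < m" for j d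
  proof -
    have "\<sigma> d \<le> \<sigma> j" using nonincreasing_below[OF sorted that] .
    then show ?thesis unfolding \<rho>_def using nonneg that S(2) by (simp add: power_mono divide_right_mono)
  qed
  have entropy_term: "(if R \<le> d then \<rho> d * ln (real R + 1) else 0) \<le> - (\<rho> d * ln (\<rho> d))" if d: "d < m" for d
  proof (cases "\<rho> d = 0")
    case False
    then have pos: "0 < \<rho> d" using \<rho>0[of d] by simp
    have small: "real (Suc d) * \<rho> d \<le> 1" using nonincreasing_distribution_le[OF _ anti sum1 d] \<rho>0 by blast
    show ?thesis
    proof (cases "R \<le> d")
      case True
      then have "\<rho> d * (real R + 1) \<le> \<rho> d * real (Suc d)" using pos by (intro mult_left_mono) auto
      then have "\<rho> d * (real R + 1) \<le> 1" using small by (simp add: mult.commute)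
      then show ?thesis using mult_ln_le_neg_entropy_term[OF pos] True by simp
    next
      case False
      have "\<rho> d \<le> real (Suc d) * \<rho> d" using pos by simp
      then have "\<rho> d \<le> 1" using small by linarith
      then show ?thesis using False pos by (simp add: mult_nonneg_nonpos)
    qed
  qed simp
  have "(\<Sum>d\<in>{R..<m}. \<rho> d) * ln (real R + 1) = (\<Sum>d<m. if R \<le> d then \<rho> d * ln (real R + 1) else 0)"
    by (simp add: sum_distrib_right sum.If_cases lessThan_def Collect_conj_eq Int_commute atLeastLessThan_def
        atLeast_def)
  also have "\<dots> \<le> (\<Sum>d<m. - (\<rho> d * ln (\<rho> d)))" using entropy_term by (intro sum_mono) auto
  finally show ?thesis unfolding \<rho>_def by (simp add: sum_negf)
qed

lemma tail_le_of_spectral_entropy_le: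
  fixes \<sigma> :: "nat \<Rightarrow> real"
  assumes nonneg: "\<forall>d<m. 0 \<le> \<sigma> d" and sorted: "\<forall>d. Suc d < m \<longrightarrow> \<sigma> (Suc d) \<le> \<sigma> d"
    and R: "1 \<le> R" and \<delta>: "0 \<le> \<delta>"
    and H: "spectral_entropy \<sigma> m \<le> \<delta> / (\<Sum>d<m. (\<sigma> d)^2) * ln (real R)"
  shows "(\<Sum>d\<in>{R..<m}. (\<sigma> d)^2) \<le> \<delta>"
proof -
  define S where "S = (\<Sum>d<m. (\<sigma> d)^2)"
  define T where "T = (\<Sum>d\<in>{R..<m}. (\<sigma> d)^2)"
  have "T \<le> S" unfolding T_def S_def by (intro sum_mono2) auto
  show ?thesis
  proof (cases "S = 0")
    case True
    then show ?thesis using \<open>T \<le> S\<close> \<delta> unfolding T_def by simp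
  next
    case False
    then have S0: "0 < S" unfolding S_def by (simp add: sum_nonneg order_le_neq_trans)
    have "T / S * ln (real R + 1) \<le> \<delta> / S * ln (real R)"
      using tail_mass_le_entropy[OF nonneg sorted S_def S0, of R] H False
      unfolding T_def S_def spectral_entropy_def Let_def by (simp add: sum_divide_distrib)
    also have "\<dots> \<le> \<delta> / S * ln (real R + 1)" using R \<delta> S0 by (intro mult_left_mono) auto
    finally have "T * ln (real R + 1) \<le> \<delta> * ln (real R + 1)"
      using S0 by (simp add: field_simps)
    then show ?thesis using R unfolding T_def by (simp add: mult_le_cancel_right)
  qed
qed

section \<open>Tensors and projections along sets of axes\<close>

definition glue :: "nat set \<Rightarrow> (nat \<Rightarrow> nat) \<Rightarrow> (nat \<Rightarrow> nat) \<Rightarrow> nat \<Rightarrow> nat" where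
  "glue K y x = (\<lambda>n. if n \<in> K then y n else x n)"

lemma matricize_eq_glue: "matricize A K r c = A (glue K r c)"
  unfolding matricize_def glue_def ..

lemma finite_tidx: "finite K \<Longrightarrow> finite (tidx D K)"
  unfolding tidx_def by (intro finite_PiE) auto

lemma restrict_in_tidx: "x \<in> tidx D U \<Longrightarrow> K \<subseteq> U \<Longrightarrow> restrict x K \<in> tidx D K"
  unfolding tidx_def by (auto simp: PiE_def Pi_def)

lemma glue_in_tidx: "y \<in> tidx D K1 \<Longrightarrow> z \<in> tidx D K2 \<Longrightarrow> glue K1 y z \<in> tidx D (K1 \<union> K2)"
  unfolding tidx_def glue_def by (auto simp: PiE_def extensional_def Pi_def)

lemma restrict_glue_same: "y \<in> tidx D K \<Longrightarrow> restrict (glue K y z) K = y"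
  unfolding tidx_def glue_def by (auto simp: PiE_def extensional_def fun_eq_iff)

lemma restrict_glue_disjoint: "K1 \<inter> K2 = {} \<Longrightarrow> restrict (glue K1 y x) K2 = restrict x K2"
  unfolding glue_def by (auto simp: fun_eq_iff)

lemma restrict_glue_other: "z \<in> tidx D K2 \<Longrightarrow> K1 \<inter> K2 = {} \<Longrightarrow> restrict (glue K1 y z) K2 = z"
  unfolding tidx_def glue_def by (auto simp: PiE_def extensional_def fun_eq_iff)

lemma glue_glue_same [simp]: "glue K y (glue K y' x) = glue K y x"
  unfolding glue_def by auto

lemma glue_glue_disjoint: "K1 \<inter> K2 = {} \<Longrightarrow> glue K2 z (glue K1 y x) = glue (K1 \<union> K2) (glue K1 y z) x"
  unfolding glue_def by (auto simp: fun_eq_iff)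

lemma bij_betw_glue:
  assumes "K1 \<inter> K2 = {}"
  shows "bij_betw (\<lambda>(y, z). glue K1 y z) (tidx D K1 \<times> tidx D K2) (tidx D (K1 \<union> K2))"
proof (rule bij_betw_byWitness[where f' = "\<lambda>x. (restrict x K1, restrict x K2)"])
  show "\<forall>p\<in>tidx D K1 \<times> tidx D K2. (\<lambda>x. (restrict x K1, restrict x K2)) ((\<lambda>(y, z). glue K1 y z) p) = p"
    using assms by (auto simp: restrict_glue_same restrict_glue_other)
  show "\<forall>x\<in>tidx D (K1 \<union> K2). (\<lambda>(y, z). glue K1 y z) (restrict x K1, restrict x K2) = x"
    unfolding tidx_def glue_def by (auto simp: PiE_def extensional_def fun_eq_iff)
  show "(\<lambda>(y, z). glue K1 y z) ` (tidx D K1 \<times> tidx D K2) \<subseteq> tidx D (K1 \<union> K2)"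
    by (auto simp: glue_in_tidx)
  show "(\<lambda>x. (restrict x K1, restrict x K2)) ` tidx D (K1 \<union> K2) \<subseteq> tidx D K1 \<times> tidx D K2"
    by (auto intro: restrict_in_tidx)
qed

lemma sum_tidx_union:
  assumes "K1 \<inter> K2 = {}"
  shows "(\<Sum>x\<in>tidx D (K1 \<union> K2). f x) = (\<Sum>y\<in>tidx D K1. \<Sum>z\<in>tidx D K2. f (glue K1 y z))"
  using sum.reindex_bij_betw[OF bij_betw_glue[OF assms, of D], of f]
  by (simp add: sum.cartesian_product case_prod_beta)

lemma sum_tidx_split:
  assumes "K \<subseteq> U"
  shows "(\<Sum>x\<in>tidx D U. f x) = (\<Sum>z\<in>tidx D (U - K). \<Sum>y\<in>tidx D K. f (glue K y z))"
proof -
  have "U = K \<union> (U - K)" using assms by auto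
  then have "(\<Sum>x\<in>tidx D U. f x) = (\<Sum>y\<in>tidx D K. \<Sum>z\<in>tidx D (U - K). f (glue K y z))"
    using sum_tidx_union[of K "U - K"] by auto
  then show ?thesis by (simp add: sum.swap[of _ "tidx D K"])
qed

type_synonym tensor = "(nat \<Rightarrow> nat) \<Rightarrow> real"

definition sqnorm :: "(nat \<Rightarrow> nat) \<Rightarrow> nat set \<Rightarrow> tensor \<Rightarrow> real" where
  "sqnorm D U T = (\<Sum>x\<in>tidx D U. (T x)^2)"

lemma sqnorm_by_columns:
  assumes "K \<subseteq> U"
  shows "sqnorm D U T = (\<Sum>z\<in>tidx D (U - K). inner_on (tidx D K) (\<lambda>y. T (glue K y z)) (\<lambda>y. T (glue K y z)))"
  unfolding sqnorm_def inner_on_def sum_tidx_split[OF assms] by (simp add: power2_eq_square)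

definition axis_proj ::
    "(nat \<Rightarrow> nat) \<Rightarrow> nat set \<Rightarrow> nat \<Rightarrow> (nat \<Rightarrow> (nat \<Rightarrow> nat) \<Rightarrow> real) \<Rightarrow> tensor \<Rightarrow> tensor" where
  "axis_proj D K k w T = (\<lambda>x. \<Sum>r<k. w r (restrict x K) * (\<Sum>y\<in>tidx D K. w r y * T (glue K y x)))"

lemma axis_proj_glue:
  "y \<in> tidx D K \<Longrightarrow> axis_proj D K k w T (glue K y z) = proj_on (tidx D K) w k (\<lambda>y'. T (glue K y' z)) y"
  unfolding axis_proj_def proj_on_def inner_on_def by (simp add: restrict_glue_same mult.commute)

definition error_growth_le ::
    "(nat \<Rightarrow> nat) \<Rightarrow> nat set \<Rightarrow> tensor \<Rightarrow> (tensor \<Rightarrow> tensor) \<Rightarrow> real \<Rightarrow> bool" where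
  "error_growth_le D U A f \<delta> \<longleftrightarrow> (\<forall>B. sqnorm D U (\<lambda>x. A x - f B x) \<le> \<delta> + sqnorm D U (\<lambda>x. A x - B x))"

lemma error_growth_le_id: "error_growth_le D U A (\<lambda>B. B) 0"
  unfolding error_growth_le_def by simp

lemma error_growth_le_comp:
  assumes "error_growth_le D U A f \<delta>1" "error_growth_le D U A g \<delta>2"
  shows "error_growth_le D U A (\<lambda>B. f (g B)) (\<delta>1 + \<delta>2)"
  unfolding error_growth_le_def
proof
  fix B
  have "sqnorm D U (\<lambda>x. A x - f (g B) x) \<le> \<delta>1 + sqnorm D U (\<lambda>x. A x - g B x)"
    using assms(1) unfolding error_growth_le_def by blast
  also have "\<dots> \<le> \<delta>1 + (\<delta>2 + sqnorm D U (\<lambda>x. A x - B x))"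
    using assms(2) unfolding error_growth_le_def by simp
  finally show "sqnorm D U (\<lambda>x. A x - f (g B) x) \<le> \<delta>1 + \<delta>2 + sqnorm D U (\<lambda>x. A x - B x)" by simp
qed

lemma error_growth_le_mono: "error_growth_le D U A f \<delta> \<Longrightarrow> \<delta> \<le> \<delta>' \<Longrightarrow> error_growth_le D U A f \<delta>'"
  unfolding error_growth_le_def by (meson add_right_mono order_trans)

lemma error_growth_le_axis_proj:
  assumes "K \<subseteq> U" "orthonormal_on (tidx D K) w k"
  shows "error_growth_le D U A (axis_proj D K k w) (sqnorm D U (\<lambda>x. A x - axis_proj D K k w A x))"
  unfolding error_growth_le_def
proof
  fix B :: "(nat \<Rightarrow> nat) \<Rightarrow> real"
  let ?col = "\<lambda>T z y. T (glue K y z)" and ?S = "tidx D K"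
  have "sqnorm D U (\<lambda>x. A x - axis_proj D K k w B x)
      = (\<Sum>z\<in>tidx D (U - K). inner_on ?S (\<lambda>y. ?col A z y - proj_on ?S w k (?col B z) y)
                                          (\<lambda>y. ?col A z y - proj_on ?S w k (?col B z) y))"
    unfolding sqnorm_by_columns[OF assms(1)] by (intro sum.cong refl inner_on_cong) (auto simp: axis_proj_glue)
  also have "\<dots> \<le> (\<Sum>z\<in>tidx D (U - K). inner_on ?S (\<lambda>y. ?col A z y - proj_on ?S w k (?col A z) y)
                                               (\<lambda>y. ?col A z y - proj_on ?S w k (?col A z) y)
                                    + inner_on ?S (\<lambda>y. ?col A z y - ?col B z y) (\<lambda>y. ?col A z y - ?col B z y))"
    by (intro sum_mono proj_on_error_le[OF assms(2)])
  also have "\<dots> = sqnorm D U (\<lambda>x. A x - axis_proj D K k w A x) + sqnorm D U (\<lambda>x. A x - B x)"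
    unfolding sqnorm_by_columns[OF assms(1)] sum.distrib
    by (intro arg_cong2[where f = "(+)"] sum.cong refl inner_on_cong) (auto simp: axis_proj_glue)
  finally show "sqnorm D U (\<lambda>x. A x - axis_proj D K k w B x)
      \<le> sqnorm D U (\<lambda>x. A x - axis_proj D K k w A x) + sqnorm D U (\<lambda>x. A x - B x)" .
qed

lemma inner_on_orthonormal_sum_self:
  assumes "orthonormal_on S w m"
  shows "inner_on S (\<lambda>s. \<Sum>d<m. c d * w d s) (\<lambda>s. \<Sum>d<m. c d * w d s) = (\<Sum>d<m. (c d)^2)"
proof -
  have "inner_on S (\<lambda>s. \<Sum>d<m. c d * w d s) (\<lambda>s. \<Sum>d<m. c d * w d s)
      = (\<Sum>d<m. c d * inner_on S (w d) (\<lambda>s. \<Sum>d<m. c d * w d s))"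
    by (simp only: inner_on_sum_left inner_on_scale_left)
  also have "\<dots> = (\<Sum>d<m. c d * c d)"
  proof (intro sum.cong refl)
    fix d assume "d \<in> {..<m}"
    then have "inner_on S (w d) (\<lambda>s. \<Sum>d<m. c d * w d s) = c d"
      by (subst inner_on_commute) (simp add: inner_on_orthonormal_sum[OF assms])
    then show "c d * inner_on S (w d) (\<lambda>s. \<Sum>d<m. c d * w d s) = c d * c d" by simp
  qed
  finally show ?thesis by (simp add: power2_eq_square)
qed

definition split_dim :: "(nat \<Rightarrow> nat) \<Rightarrow> nat set \<Rightarrow> nat set \<Rightarrow> nat" where
  "split_dim D U K = min (card (tidx D K)) (card (tidx D (U - K)))"

lemma is_svd_matricizeD:
  assumes "is_svd (tidx D K) (tidx D (U - K)) (matricize A K) \<sigma> u v"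
  shows "orthonormal_on (tidx D K) u (split_dim D U K)" "orthonormal_on (tidx D (U - K)) v (split_dim D U K)"
    "\<forall>d<split_dim D U K. 0 \<le> \<sigma> d" "\<forall>d. Suc d < split_dim D U K \<longrightarrow> \<sigma> (Suc d) \<le> \<sigma> d"
    "\<And>y z. y \<in> tidx D K \<Longrightarrow> z \<in> tidx D (U - K) \<Longrightarrow>
       A (glue K y z) = (\<Sum>d<split_dim D U K. (\<sigma> d * v d z) * u d y)"
  using assms unfolding is_svd_def Let_def orthonormal_on_def inner_on_def split_dim_def matricize_eq_glue
  by (auto simp: mult_ac)

lemma inner_on_svd_column:
  assumes svd: "is_svd (tidx D K) (tidx D (U - K)) (matricize A K) \<sigma> u v"
    and z: "z \<in> tidx D (U - K)" and d: "d < split_dim D U K"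
  shows "inner_on (tidx D K) (\<lambda>y. A (glue K y z)) (u d) = \<sigma> d * v d z"
  using is_svd_matricizeD[OF svd]
  by (subst inner_on_cong[OF is_svd_matricizeD(5)[OF svd _ z] refl])
    (auto intro: inner_on_orthonormal_sum d)

lemma sqnorm_sub_axis_proj_svd:
  assumes KU: "K \<subseteq> U" and svd: "is_svd (tidx D K) (tidx D (U - K)) (matricize A K) \<sigma> u v"
    and k: "k \<le> split_dim D U K"
  shows "sqnorm D U (\<lambda>x. A x - axis_proj D K k u A x) = (\<Sum>d\<in>{k..<split_dim D U K}. (\<sigma> d)^2)"
proof -
  define m where "m = split_dim D U K"
  note svd_facts = is_svd_matricizeD[OF svd, folded m_def]
  have residual: "inner_on (tidx D K) (\<lambda>y. A (glue K y z) - proj_on (tidx D K) u k (\<lambda>y. A (glue K y z)) y)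
                                      (\<lambda>y. A (glue K y z) - proj_on (tidx D K) u k (\<lambda>y. A (glue K y z)) y)
      = (\<Sum>d\<in>{k..<m}. (\<sigma> d)^2 * (v d z)^2)" if z: "z \<in> tidx D (U - K)" for z
  proof -
    have "inner_on (tidx D K) (\<lambda>y. A (glue K y z)) (\<lambda>y. A (glue K y z)) = (\<Sum>d<m. (\<sigma> d * v d z)^2)"
      using svd_facts(5)[OF _ z] by (subst inner_on_cong) (auto intro: inner_on_orthonormal_sum_self svd_facts(1))
    moreover have "(\<Sum>d<k. (inner_on (tidx D K) (\<lambda>y. A (glue K y z)) (u d))^2) = (\<Sum>d<k. (\<sigma> d * v d z)^2)"
      using inner_on_svd_column[OF svd z] k unfolding m_def by simp
    moreover have "(\<Sum>d<m. (\<sigma> d * v d z)^2) = (\<Sum>d<k. (\<sigma> d * v d z)^2) + (\<Sum>d\<in>{k..<m}. (\<sigma> d * v d z)^2)"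
      using sum.atLeastLessThan_concat[of 0 k m "\<lambda>d. (\<sigma> d * v d z)^2"] k unfolding m_def
      by (simp add: atLeast0LessThan)
    ultimately show ?thesis
      unfolding inner_on_residual_self[OF orthonormal_on_mono[OF svd_facts(1) k[folded m_def]]]
      by (simp add: power_mult_distrib)
  qed
  have "sqnorm D U (\<lambda>x. A x - axis_proj D K k u A x) = (\<Sum>z\<in>tidx D (U - K). \<Sum>d\<in>{k..<m}. (\<sigma> d)^2 * (v d z)^2)"
    unfolding sqnorm_by_columns[OF KU] using residual by (simp add: axis_proj_glue cong: inner_on_cong)
  also have "\<dots> = (\<Sum>d\<in>{k..<m}. (\<sigma> d)^2 * inner_on (tidx D (U - K)) (v d) (v d))"
    by (subst sum.swap) (simp add: inner_on_def sum_distrib_left power2_eq_square)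
  also have "\<dots> = (\<Sum>d\<in>{k..<m}. (\<sigma> d)^2)"
    using svd_facts(2) unfolding orthonormal_on_def by simp
  finally show ?thesis unfolding m_def .
qed

lemma glue_restrict_complement: "x \<in> tidx D U \<Longrightarrow> glue K y (restrict x (U - K)) = glue K y x"
  unfolding tidx_def glue_def by (auto simp: PiE_def extensional_def fun_eq_iff)

lemma axis_proj_svd_eq_truncation:
  assumes svd: "is_svd (tidx D K) (tidx D (U - K)) (matricize A K) \<sigma> u v"
    and k: "k \<le> split_dim D U K" and x: "x \<in> tidx D U"
  shows "axis_proj D K k u A x = (\<Sum>r<k. \<sigma> r * u r (restrict x K) * v r (restrict x (U - K)))"
proof -
  have xc: "restrict x (U - K) \<in> tidx D (U - K)" using restrict_in_tidx[OF x] by auto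
  have "(\<Sum>y\<in>tidx D K. u r y * A (glue K y x)) = \<sigma> r * v r (restrict x (U - K))" if "r < k" for r
  proof -
    have "inner_on (tidx D K) (\<lambda>y. A (glue K y x)) (u r) = \<sigma> r * v r (restrict x (U - K))"
      using inner_on_svd_column[OF svd xc, of r] that k by (simp add: glue_restrict_complement[OF x])
    then show ?thesis unfolding inner_on_def by (simp add: mult.commute)
  qed
  then show ?thesis unfolding axis_proj_def by (simp add: mult_ac)
qed

lemma sqnorm_eq_sum_sing_sq:
  assumes "K \<subseteq> U" "is_svd (tidx D K) (tidx D (U - K)) (matricize A K) \<sigma> u v"
  shows "sqnorm D U A = (\<Sum>d<split_dim D U K. (\<sigma> d)^2)"
  using sqnorm_sub_axis_proj_svd[OF assms, of 0] by (simp add: axis_proj_def atLeast0LessThan)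

definition sing_vecs ::
    "(nat \<Rightarrow> nat) \<Rightarrow> nat set \<Rightarrow> tensor \<Rightarrow> nat set \<Rightarrow> (nat \<Rightarrow> (nat \<Rightarrow> nat) \<Rightarrow> real) \<times> (nat \<Rightarrow> (nat \<Rightarrow> nat) \<Rightarrow> real)" where
  "sing_vecs D U A K = (SOME p. is_svd (tidx D K) (tidx D (U - K)) (matricize A K)
                                  (sing_vals (tidx D K) (tidx D (U - K)) (matricize A K)) (fst p) (snd p))"

lemma is_svd_sing_vecs:
  assumes "finite U" "K \<subseteq> U"
  shows "is_svd (tidx D K) (tidx D (U - K)) (matricize A K)
           (sing_vals (tidx D K) (tidx D (U - K)) (matricize A K)) (fst (sing_vecs D U A K)) (snd (sing_vecs D U A K))"
proof -
  have "finite (tidx D K)" "finite (tidx D (U - K))"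
    using assms by (auto intro: finite_tidx finite_subset)
  then have "\<exists>u v. is_svd (tidx D K) (tidx D (U - K)) (matricize A K)
                   (sing_vals (tidx D K) (tidx D (U - K)) (matricize A K)) u v"
    unfolding sing_vals_def by (rule someI_ex[OF svd_exists])
  then show ?thesis unfolding sing_vecs_def by (metis (mono_tags, lifting) fst_conv snd_conv someI_ex)
qed

lemma truncation_error_le_of_QE_le:
  assumes K: "K \<subseteq> {1..N}" and R: "1 \<le> R" and \<delta>: "0 \<le> \<delta>"
    and QE: "QE D N A K \<le> \<delta> / sqnorm D {1..N} A * ln (real R)"
  shows "sqnorm D {1..N} (\<lambda>x. A x - axis_proj D K (min R (split_dim D {1..N} K)) (fst (sing_vecs D {1..N} A K)) A x) \<le> \<delta>"
proof -
  define \<sigma> where "\<sigma> = sing_vals (tidx D K) (tidx D ({1..N} - K)) (matricize A K)"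
  note svd = is_svd_sing_vecs[OF finite_atLeastAtMost K, of D A, folded \<sigma>_def]
  have "{min R (split_dim D {1..N} K)..<split_dim D {1..N} K} = {R..<split_dim D {1..N} K}" by auto
  then have "sqnorm D {1..N} (\<lambda>x. A x - axis_proj D K (min R (split_dim D {1..N} K)) (fst (sing_vecs D {1..N} A K)) A x)
      = (\<Sum>d\<in>{R..<split_dim D {1..N} K}. (\<sigma> d)^2)"
    using sqnorm_sub_axis_proj_svd[OF K svd] by simp
  also have "\<dots> \<le> \<delta>"
    using QE is_svd_matricizeD(3,4)[OF svd] R \<delta> sqnorm_eq_sum_sing_sq[OF K svd]
    by (intro tail_le_of_spectral_entropy_le)
      (auto simp: QE_eq_spectral_entropy split_dim_def \<sigma>_def)
  finally show ?thesis .
qed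

section \<open>The locally connected tensor network\<close>

definition block :: "nat \<Rightarrow> nat \<Rightarrow> nat set" where
  "block l n = {2^l * (n - 1) + 1 .. 2^l * n}"

lemma block_children:
  assumes "1 \<le> n"
  shows "block l (2 * n - 1) \<union> block l (2 * n) = block (Suc l) n"
    and "block l (2 * n - 1) \<inter> block l (2 * n) = {}"
proof -
  obtain n' where n: "n = Suc n'" using assms by (cases n) auto
  have "block l (2 * n - 1) = {2^l * (2 * n') + 1 .. 2^l * (2 * n' + 1)}"
    unfolding block_def n by simp
  moreover have "block l (2 * n) = {2^l * (2 * n' + 1) + 1 .. 2^l * (2 * n' + 2)}"
    unfolding block_def n by (simp add: algebra_simps)
  moreover have "block (Suc l) n = {2^l * (2 * n') + 1 .. 2^l * (2 * n' + 2)}"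
    unfolding block_def n by (simp add: algebra_simps)
  moreover have "2^l * (2 * n') \<le> 2^l * (2 * n' + 1)" "2^l * (2 * n' + 1) \<le> (2::nat)^l * (2 * n' + 2)"
    by simp_all
  ultimately show "block l (2 * n - 1) \<union> block l (2 * n) = block (Suc l) n"
    and "block l (2 * n - 1) \<inter> block l (2 * n) = {}"
    by auto
qed

lemma block_leaf: "1 \<le> n \<Longrightarrow> block 0 n = {n}"
  unfolding block_def by auto

lemma block_subset:
  assumes "1 \<le> n" "n \<le> 2^(L - l)" "l \<le> L"
  shows "block l n \<subseteq> {1..2^L}"
proof -
  have "2^l * n \<le> 2^l * 2^(L - l)" using assms by simp
  also have "\<dots> = (2::nat)^L" using assms(3) by (simp add: power_add[symmetric])
  finally show ?thesis unfolding block_def by auto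
qed

lemma block_in_canonical_parts:
  assumes "1 \<le> n" "n \<le> 2^(L - l)" "l \<le> L"
  shows "block l n \<in> canonical_parts L"
  unfolding canonical_parts_def block_def using assms
  by (intro CollectI exI[of _ "L - l"] exI[of _ n]) auto

lemma block_root_children:
  assumes "1 \<le> L"
  shows "block (L - 1) 1 \<union> block (L - 1) 2 = {1..2^L}" "block (L - 1) 1 \<inter> block (L - 1) 2 = {}"
  using block_children[of 1 "L - 1"] assms by (simp_all add: block_def)

text \<open>Vectors \<open>u l n r\<close>, \<open>r < R\<close>, indexed by \<open>tidx D (block l n)\<close>, at the node \<open>(l, n)\<close> of the tree;
  the level \<open>l\<close> is counted from the leaves, so that \<open>l = L - 1\<close> holds the two children of the root.\<close>
type_synonym node_basis = "nat \<Rightarrow> nat \<Rightarrow> nat \<Rightarrow> (nat \<Rightarrow> nat) \<Rightarrow> real"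

definition leaf_vecs :: "node_basis \<Rightarrow> nat \<Rightarrow> nat \<Rightarrow> nat \<Rightarrow> real" where
  "leaf_vecs u n r k = u 0 n r ((\<lambda>_. undefined)(n := k))"

text \<open>The coefficient \<open>a l n r i j\<close> of the network is the coordinate of \<open>u l n r\<close> along the
  product of the children's vectors \<open>u (l-1) (2n-1) i\<close> and \<open>u (l-1) (2n) j\<close>.\<close>
fun tree_coeffs :: "(nat \<Rightarrow> nat) \<Rightarrow> node_basis \<Rightarrow> nat \<Rightarrow> nat \<Rightarrow> nat \<Rightarrow> nat \<Rightarrow> nat \<Rightarrow> real" where
  "tree_coeffs D u 0 n r i j = 0"
| "tree_coeffs D u (Suc l) n r i j =
     (\<Sum>y\<in>tidx D (block (Suc l) n). u l (2*n-1) i (restrict y (block l (2*n-1))) *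
                                     u l (2*n) j (restrict y (block l (2*n))) * u (Suc l) n r y)"

definition node_proj :: "(nat \<Rightarrow> nat) \<Rightarrow> nat \<Rightarrow> node_basis \<Rightarrow> nat \<Rightarrow> nat \<Rightarrow> tensor \<Rightarrow> tensor" where
  "node_proj D R u l n = axis_proj D (block l n) R (u l n)"

fun descendants_proj :: "(nat \<Rightarrow> nat) \<Rightarrow> nat \<Rightarrow> node_basis \<Rightarrow> nat \<Rightarrow> nat \<Rightarrow> tensor \<Rightarrow> tensor" where
  "descendants_proj D R u 0 n T = T"
| "descendants_proj D R u (Suc l) n T =
     descendants_proj D R u l (2*n-1) (node_proj D R u l (2*n-1)
       (descendants_proj D R u l (2*n) (node_proj D R u l (2*n) T)))"

lemma restrict_single: "restrict x {n} = (\<lambda>_. undefined)(n := x n)"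
  by (auto simp: restrict_def fun_eq_iff)

lemma tn_phi_local:
  assumes "1 \<le> n" "\<forall>i\<in>block l n. x i = x' i"
  shows "tn_phi R v a l n r x = tn_phi R v a l n r x'"
  using assms
proof (induction l arbitrary: n r)
  case 0
  then show ?case using block_leaf[of n] by simp
next
  case (Suc l)
  have "\<forall>i\<in>block l (2*n-1). x i = x' i" "\<forall>i\<in>block l (2*n). x i = x' i"
    using Suc.prems block_children(1)[OF Suc.prems(1), of l] by auto
  then show ?case using Suc.IH[of "2*n-1"] Suc.IH[of "2*n"] Suc.prems(1) by simp
qed

lemma tree_coeffs_Suc_split:
  assumes "1 \<le> n"
  shows "tree_coeffs D u (Suc l) n r i j =
    (\<Sum>y\<in>tidx D (block l (2*n-1)). \<Sum>z\<in>tidx D (block l (2*n)).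
        u l (2*n-1) i y * u l (2*n) j z * u (Suc l) n r (glue (block l (2*n-1)) y z))"
proof -
  have split: "block (Suc l) n = block l (2*n-1) \<union> block l (2*n)" "block l (2*n-1) \<inter> block l (2*n) = {}"
    using block_children[OF assms, of l] by auto
  show ?thesis
    unfolding tree_coeffs.simps split(1) sum_tidx_union[OF split(2)]
    using split(2) by (intro sum.cong refl) (simp add: restrict_glue_same restrict_glue_other)
qed

lemma sum_mult_sum_commute:
  fixes f :: "'a \<Rightarrow> 'c::comm_semiring_0"
  shows "(\<Sum>a\<in>A. f a * (\<Sum>r\<in>B. c r * g a r)) = (\<Sum>r\<in>B. c r * (\<Sum>a\<in>A. f a * g a r))"
proof -
  have "(\<Sum>a\<in>A. f a * (\<Sum>r\<in>B. c r * g a r)) = (\<Sum>a\<in>A. \<Sum>r\<in>B. c r * (f a * g a r))"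
    unfolding sum_distrib_left by (simp add: mult.left_commute)
  also have "\<dots> = (\<Sum>r\<in>B. \<Sum>a\<in>A. c r * (f a * g a r))" by (rule sum.swap)
  finally show ?thesis by (simp add: sum_distrib_left)
qed

lemma axis_proj_glue_union:
  assumes disj: "K1 \<inter> K2 = {}" and y: "y \<in> tidx D K1" and z: "z \<in> tidx D K2"
  shows "axis_proj D (K1 \<union> K2) k w T (glue K2 z (glue K1 y x))
    = (\<Sum>r<k. (\<Sum>y'\<in>tidx D (K1 \<union> K2). w r y' * T (glue (K1 \<union> K2) y' x)) * w r (glue K1 y z))"
proof -
  have "glue K1 y z \<in> tidx D (K1 \<union> K2)" by (rule glue_in_tidx[OF y z])
  then show ?thesis
    unfolding axis_proj_def glue_glue_disjoint[OF disj] by (simp add: restrict_glue_same mult.commute)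
qed

lemma tn_phi_Suc_expand:
  fixes l n R :: nat and D :: "nat \<Rightarrow> nat" and u :: node_basis
  assumes "1 \<le> n"
  defines "K1 \<equiv> block l (2*n-1)" and "K2 \<equiv> block l (2*n)"
    and "\<phi>1 \<equiv> tn_phi R (leaf_vecs u) (tree_coeffs D u) l (2*n-1)"
    and "\<phi>2 \<equiv> tn_phi R (leaf_vecs u) (tree_coeffs D u) l (2*n)"
  shows "tn_phi R (leaf_vecs u) (tree_coeffs D u) (Suc l) n r x =
    (\<Sum>i<R. \<phi>1 i x * (\<Sum>y\<in>tidx D K1. u l (2*n-1) i y *
       (\<Sum>j<R. \<phi>2 j x * (\<Sum>z\<in>tidx D K2. u l (2*n) j z * u (Suc l) n r (glue K1 y z)))))"
proof -
  have "(\<Sum>y\<in>tidx D K1. u l (2*n-1) i y *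
          (\<Sum>j<R. \<phi>2 j x * (\<Sum>z\<in>tidx D K2. u l (2*n) j z * u (Suc l) n r (glue K1 y z))))
      = (\<Sum>j<R. \<phi>2 j x * tree_coeffs D u (Suc l) n r i j)" for i
  proof -
    have "(\<Sum>y\<in>tidx D K1. u l (2*n-1) i y * (\<Sum>z\<in>tidx D K2. u l (2*n) j z * u (Suc l) n r (glue K1 y z)))
        = tree_coeffs D u (Suc l) n r i j" for j
      unfolding tree_coeffs_Suc_split[OF assms(1)] K1_def K2_def
      by (simp add: sum_distrib_left mult.assoc del: tree_coeffs.simps)
    then show ?thesis by (subst sum_mult_sum_commute) (simp del: tree_coeffs.simps)
  qed
  then show ?thesis unfolding \<phi>1_def \<phi>2_def
    by (simp add: sum_distrib_left mult_ac del: tree_coeffs.simps)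
qed

text \<open>By the choice of \<open>tree_coeffs\<close>, the children's expansions along \<open>tn_phi\<close> recombine into the
  parent's.\<close>
lemma descendants_proj_node_proj:
  assumes "1 \<le> n"
  shows "descendants_proj D R u l n (node_proj D R u l n T) x =
    (\<Sum>r<R. tn_phi R (leaf_vecs u) (tree_coeffs D u) l n r x *
             (\<Sum>y\<in>tidx D (block l n). u l n r y * T (glue (block l n) y x)))"
  using assms
proof (induction l arbitrary: n T x)
  case 0
  then show ?case
    by (simp add: node_proj_def axis_proj_def leaf_vecs_def block_leaf restrict_single)
next
  case (Suc l)
  define K K1 K2 where "K = block (Suc l) n" and "K1 = block l (2*n-1)" and "K2 = block l (2*n)"
  have KK: "K = K1 \<union> K2" and disj: "K1 \<inter> K2 = {}"
    using block_children[OF Suc.prems, of l] unfolding K_def K1_def K2_def by auto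
  define u1 u2 w where "u1 = u l (2*n-1)" and "u2 = u l (2*n)" and "w = u (Suc l) n"
  define \<phi>1 \<phi>2 where "\<phi>1 = tn_phi R (leaf_vecs u) (tree_coeffs D u) l (2*n-1)"
    and "\<phi>2 = tn_phi R (leaf_vecs u) (tree_coeffs D u) l (2*n)"
  define c where "c = (\<lambda>r. \<Sum>y\<in>tidx D K. w r y * T (glue K y x))"
  have \<phi>2_local: "\<phi>2 j (glue K1 y x) = \<phi>2 j x" for j y
    unfolding \<phi>2_def using disj Suc.prems by (intro tn_phi_local) (auto simp: K2_def glue_def)
  have T': "node_proj D R u (Suc l) n T (glue K2 z (glue K1 y x)) = (\<Sum>r<R. c r * w r (glue K1 y z))"
    if "y \<in> tidx D K1" "z \<in> tidx D K2" for y z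
    using axis_proj_glue_union[OF disj that, of R w T x]
    unfolding node_proj_def K_def[symmetric] w_def[symmetric] KK[symmetric] c_def by (simp add: mult.commute)
  have "descendants_proj D R u l (2*n) (node_proj D R u l (2*n) (node_proj D R u (Suc l) n T)) (glue K1 y x)
      = (\<Sum>j<R. \<phi>2 j x * (\<Sum>z\<in>tidx D K2. u2 j z * (\<Sum>r<R. c r * w r (glue K1 y z))))"
    if y: "y \<in> tidx D K1" for y
  proof -
    have "descendants_proj D R u l (2*n) (node_proj D R u l (2*n) (node_proj D R u (Suc l) n T)) (glue K1 y x)
        = (\<Sum>j<R. \<phi>2 j (glue K1 y x) *
             (\<Sum>z\<in>tidx D K2. u2 j z * node_proj D R u (Suc l) n T (glue K2 z (glue K1 y x))))"
      using Suc.IH[of "2*n"] Suc.prems unfolding \<phi>2_def u2_def K2_def by simp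
    then show ?thesis by (simp add: \<phi>2_local T'[OF y] cong: sum.cong)
  qed
  note inner = this
  have "descendants_proj D R u (Suc l) n (node_proj D R u (Suc l) n T) x
      = (\<Sum>i<R. \<phi>1 i x * (\<Sum>y\<in>tidx D K1. u1 i y *
          descendants_proj D R u l (2*n) (node_proj D R u l (2*n) (node_proj D R u (Suc l) n T)) (glue K1 y x)))"
    using Suc.IH[of "2*n-1"] Suc.prems unfolding \<phi>1_def u1_def K1_def by simp
  also have "\<dots> = (\<Sum>i<R. \<phi>1 i x * (\<Sum>y\<in>tidx D K1. u1 i y *
          (\<Sum>j<R. \<phi>2 j x * (\<Sum>z\<in>tidx D K2. u2 j z * (\<Sum>r<R. c r * w r (glue K1 y z))))))"
    using inner by (simp cong: sum.cong)
  also have "\<dots> = (\<Sum>r<R. c r * (\<Sum>i<R. \<phi>1 i x * (\<Sum>y\<in>tidx D K1. u1 i y *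
          (\<Sum>j<R. \<phi>2 j x * (\<Sum>z\<in>tidx D K2. u2 j z * w r (glue K1 y z))))))"
    by (simp only: sum_mult_sum_commute[where c = c])
  also have "\<dots> = (\<Sum>r<R. c r * tn_phi R (leaf_vecs u) (tree_coeffs D u) (Suc l) n r x)"
    unfolding tn_phi_Suc_expand[OF Suc.prems] u1_def u2_def w_def \<phi>1_def \<phi>2_def K1_def K2_def ..
  finally show ?case unfolding c_def K_def w_def by (simp add: mult.commute)
qed

lemma sum_lessThan_if_less:
  fixes k R :: nat
  assumes "k \<le> R"
  shows "(\<Sum>r<R. if r < k then f r else 0) = (\<Sum>r<k. f r)"
proof -
  have "(\<Sum>r<R. if r < k then f r else 0) = (\<Sum>r<R. if r \<in> {..<k} then f r else 0)" by simp
  also have "\<dots> = sum f ({..<R} \<inter> {..<k})" by (rule sum.inter_restrict[symmetric]) simp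
  also have "{..<R} \<inter> {..<k} = {..<k}" using assms by auto
  finally show ?thesis .
qed

definition pad :: "nat \<Rightarrow> (nat \<Rightarrow> 'a \<Rightarrow> real) \<Rightarrow> nat \<Rightarrow> 'a \<Rightarrow> real" where
  "pad k w = (\<lambda>r. if r < k then w r else (\<lambda>_. 0))"

lemma axis_proj_pad:
  assumes "k \<le> R"
  shows "axis_proj D K R (pad k w) = axis_proj D K k w"
proof (intro ext)
  fix T x
  have "axis_proj D K R (pad k w) T x
      = (\<Sum>r<R. if r < k then w r (restrict x K) * (\<Sum>y\<in>tidx D K. w r y * T (glue K y x)) else 0)"
    unfolding axis_proj_def pad_def by (intro sum.cong refl) auto
  then show "axis_proj D K R (pad k w) T x = axis_proj D K k w T x"
    using assms by (simp add: sum_lessThan_if_less axis_proj_def)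
qed

lemma inner_rank_form_column:
  assumes ortho: "orthonormal_on (tidx D K) w k" and r: "r < k"
    and local: "\<And>s x y. y \<in> tidx D K \<Longrightarrow> g s (glue K y x) = g s x"
  shows "(\<Sum>y\<in>tidx D K. w r y * (\<Sum>s<k. w s (restrict (glue K y x) K) * g s (glue K y x))) = g r x"
proof -
  have "(\<Sum>y\<in>tidx D K. w r y * (\<Sum>s<k. w s (restrict (glue K y x) K) * g s (glue K y x)))
      = inner_on (tidx D K) (\<lambda>y. \<Sum>s<k. g s x * w s y) (w r)"
    unfolding inner_on_def using local by (intro sum.cong) (auto simp: restrict_glue_same mult_ac)
  also have "\<dots> = g r x" using inner_on_orthonormal_sum[OF ortho r] .
  finally show ?thesis .
qed

lemma axis_proj_rank_form:
  assumes ortho: "orthonormal_on (tidx D K) w k"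
    and local: "\<And>s x y. y \<in> tidx D K \<Longrightarrow> g s (glue K y x) = g s x"
  shows "axis_proj D K k w (\<lambda>x. \<Sum>s<k. w s (restrict x K) * g s x) = (\<lambda>x. \<Sum>s<k. w s (restrict x K) * g s x)"
proof (rule ext)
  fix x
  show "axis_proj D K k w (\<lambda>x. \<Sum>s<k. w s (restrict x K) * g s x) x = (\<Sum>s<k. w s (restrict x K) * g s x)"
    unfolding axis_proj_def using inner_rank_form_column[where g = g, OF ortho _ local]
    by (intro sum.cong refl) simp
qed

lemma error_growth_le_descendants_proj:
  assumes "l \<le> L" "1 \<le> n" "n \<le> 2^(L - l)"
    and nodes: "\<And>l' m. l' < l \<Longrightarrow> 1 \<le> m \<Longrightarrow> m \<le> 2^(L - l') \<Longrightarrow> error_growth_le D U A (node_proj D R u l' m) \<tau>"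
  shows "error_growth_le D U A (descendants_proj D R u l n) ((2 * 2^l - 2) * \<tau>)"
  using assms
proof (induction l arbitrary: n)
  case 0
  then show ?case using error_growth_le_id by simp
next
  case (Suc l)
  have "2 * n \<le> 2 * 2^(L - Suc l)" using Suc.prems by simp
  also have "\<dots> = 2^(L - l)" using Suc.prems(1) by (simp flip: power_Suc add: Suc_diff_Suc)
  finally have n: "1 \<le> 2*n-1" "1 \<le> 2*n" "2*n-1 \<le> 2^(L - l)" "2*n \<le> 2^(L - l)" using Suc.prems by auto
  have nodes_below: "error_growth_le D U A (node_proj D R u l' m) \<tau>"
    if "l' < Suc l" "1 \<le> m" "m \<le> 2^(L - l')" for l' m
    using Suc.prems(4) that by blast
  have "error_growth_le D U A (descendants_proj D R u l (2*n-1)) ((2 * 2^l - 2) * \<tau>)"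
    "error_growth_le D U A (descendants_proj D R u l (2*n)) ((2 * 2^l - 2) * \<tau>)"
    using Suc.IH[OF _ _ _ nodes_below] n Suc.prems(1) by simp_all
  moreover have "error_growth_le D U A (node_proj D R u l (2*n-1)) \<tau>"
    "error_growth_le D U A (node_proj D R u l (2*n)) \<tau>"
    using n nodes_below by simp_all
  ultimately have "error_growth_le D U A (\<lambda>B. descendants_proj D R u l (2*n-1) (node_proj D R u l (2*n-1)
      (descendants_proj D R u l (2*n) (node_proj D R u l (2*n) B))))
      ((2 * 2^l - 2) * \<tau> + (\<tau> + ((2 * 2^l - 2) * \<tau> + \<tau>)))"
    by (metis error_growth_le_comp)
  moreover have "(2 * 2^l - 2) * \<tau> + (\<tau> + ((2 * 2^l - 2) * \<tau> + \<tau>)) = (2 * 2^Suc l - 2) * \<tau>"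
    by (simp add: algebra_simps)
  ultimately show ?case by (simp add: fun_eq_iff[symmetric])
qed

lemma descendants_proj_rank_form:
  assumes n: "1 \<le> n" and k: "k \<le> R"
    and ortho: "orthonormal_on (tidx D (block l n)) w k" and basis: "u l n = pad k w"
    and local: "\<And>r x y. y \<in> tidx D (block l n) \<Longrightarrow> g r (glue (block l n) y x) = g r x"
  shows "descendants_proj D R u l n (\<lambda>x. \<Sum>r<k. w r (restrict x (block l n)) * g r x) x
    = (\<Sum>r<k. tn_phi R (leaf_vecs u) (tree_coeffs D u) l n r x * g r x)"
proof -
  define K where "K = block l n"
  define F where "F = (\<lambda>x. \<Sum>r<k. w r (restrict x K) * g r x)"
  define \<phi> where "\<phi> = tn_phi R (leaf_vecs u) (tree_coeffs D u) l n"
  have "node_proj D R u l n F = F"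
    unfolding node_proj_def basis axis_proj_pad[OF k] F_def K_def
    by (rule axis_proj_rank_form[where g = g, OF ortho local])
  then have "descendants_proj D R u l n F x = descendants_proj D R u l n (node_proj D R u l n F) x" by simp
  also have "\<dots> = (\<Sum>r<R. \<phi> r x * (\<Sum>y\<in>tidx D K. pad k w r y * F (glue K y x)))"
    unfolding descendants_proj_node_proj[OF n] basis \<phi>_def K_def ..
  also have "\<dots> = (\<Sum>r<R. if r < k then \<phi> r x * g r x else 0)"
    using inner_rank_form_column[where g = g, OF ortho[folded K_def] _ local[folded K_def]]
    unfolding pad_def F_def by (intro sum.cong refl) simp
  finally show ?thesis unfolding F_def K_def \<phi>_def sum_lessThan_if_less[OF k] .
qed

text \<open>At the root the network contracts the two top bases with the diagonal matrix of singular
  values; applied to the rank-\<open>k\<close> truncation, the projections at the two root children act as the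
  identity, which is why they cost nothing.\<close>
lemma tn_W_eq_descendants_proj_truncation:
  assumes L: "1 \<le> L" and k: "k \<le> R"
    and ou: "orthonormal_on (tidx D (block (L-1) 1)) U k" and ov: "orthonormal_on (tidx D (block (L-1) 2)) V k"
    and u1: "u (L-1) 1 = pad k U" and u2: "u (L-1) 2 = pad k V"
  shows "tn_W R (leaf_vecs u) (tree_coeffs D u) (\<lambda>i j. if i = j \<and> i < k then \<sigma> i else 0) L x =
    descendants_proj D R u (L-1) 1 (descendants_proj D R u (L-1) 2
      (\<lambda>x. \<Sum>r<k. \<sigma> r * U r (restrict x (block (L-1) 1)) * V r (restrict x (block (L-1) 2)))) x"
proof -
  define K1 K2 where "K1 = block (L-1) 1" and "K2 = block (L-1) 2"
  have disj: "K1 \<inter> K2 = {}" "K2 \<inter> K1 = {}" using block_root_children[OF L] unfolding K1_def K2_def by auto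
  define \<phi>1 \<phi>2 where "\<phi>1 = tn_phi R (leaf_vecs u) (tree_coeffs D u) (L-1) 1"
    and "\<phi>2 = tn_phi R (leaf_vecs u) (tree_coeffs D u) (L-1) 2"
  define gX gY where "gX = (\<lambda>r x. \<sigma> r * U r (restrict x K1))" and "gY = (\<lambda>r x. \<sigma> r * \<phi>2 r x)"
  have X_local: "gX r (glue K2 y x) = gX r x" for r y x
    unfolding gX_def using restrict_glue_disjoint[OF disj(2)] by simp
  have Y_local: "gY r (glue K1 y x) = gY r x" for r y x
  proof -
    have agree: "\<forall>i\<in>block (L-1) 2. glue K1 y x i = x i" using disj unfolding K2_def[symmetric] glue_def by auto
    show ?thesis using tn_phi_local[OF _ agree] unfolding gY_def \<phi>2_def by simp
  qed
  have "descendants_proj D R u (L-1) 2 (\<lambda>x. \<Sum>r<k. V r (restrict x K2) * gX r x)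
      = (\<lambda>x. \<Sum>r<k. U r (restrict x K1) * gY r x)"
    using descendants_proj_rank_form[where g = gX and u = u and l = "L-1" and n = 2, OF _ k ov u2] X_local
    unfolding K2_def gX_def gY_def \<phi>2_def by (auto simp: mult_ac)
  moreover have "descendants_proj D R u (L-1) 1 (\<lambda>x. \<Sum>r<k. U r (restrict x K1) * gY r x) x
      = (\<Sum>r<k. \<phi>1 r x * gY r x)"
    using descendants_proj_rank_form[where g = gY and u = u and l = "L-1" and n = 1, OF _ k ou u1] Y_local unfolding K1_def \<phi>1_def by simp
  moreover have "(\<Sum>j<R. (if i = j \<and> i < k then \<sigma> i else 0) * \<phi>1 i x * \<phi>2 j x)
      = (if i < k then \<phi>1 i x * gY i x else 0)" if "i < R" for i
    using that unfolding gY_def by (cases "i < k") (simp_all add: if_distrib[of "\<lambda>c. c * _"] cong: if_cong)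
  ultimately show ?thesis
    unfolding tn_W_def \<phi>1_def[symmetric] \<phi>2_def[symmetric] gX_def K1_def K2_def
    by (simp add: sum_lessThan_if_less[OF k] mult_ac)
qed

section \<open>Hierarchical truncated SVD\<close>

text \<open>The second child of the root takes the right singular vectors of the first child's
  matricization, so that the two halves of the root share a single SVD.\<close>
definition htsvd_basis :: "(nat \<Rightarrow> nat) \<Rightarrow> nat \<Rightarrow> nat \<Rightarrow> tensor \<Rightarrow> node_basis" where
  "htsvd_basis D L R A l n =
     (if l = L - 1 \<and> n = 2
      then pad (min R (split_dim D {1..2^L} (block l 1))) (snd (sing_vecs D {1..2^L} A (block l 1)))
      else pad (min R (split_dim D {1..2^L} (block l n))) (fst (sing_vecs D {1..2^L} A (block l n))))"

lemma error_growth_le_htsvd_node: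
  assumes l: "l < L - 1" and n: "1 \<le> n" "n \<le> 2^(L - l)" and R: "1 \<le> R" and \<tau>: "0 \<le> \<tau>"
    and QE: "QE D (2^L) A (block l n) \<le> \<tau> / sqnorm D {1..2^L} A * ln (real R)"
  shows "error_growth_le D {1..2^L} A (node_proj D R (htsvd_basis D L R A) l n) \<tau>"
proof -
  define K where "K = block l n"
  define k where "k = min R (split_dim D {1..2^L} K)"
  define u where "u = fst (sing_vecs D {1..2^L} A K)"
  have K: "K \<subseteq> {1..2^L}" unfolding K_def using l n by (intro block_subset) auto
  have "node_proj D R (htsvd_basis D L R A) l n = axis_proj D K k u"
    using l unfolding node_proj_def htsvd_basis_def K_def[symmetric] k_def u_def by (simp add: axis_proj_pad)
  moreover have "orthonormal_on (tidx D K) u k"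
    using is_svd_matricizeD(1)[OF is_svd_sing_vecs[OF finite_atLeastAtMost K]] unfolding u_def k_def
    by (rule orthonormal_on_mono) simp
  moreover have "sqnorm D {1..2^L} (\<lambda>x. A x - axis_proj D K k u A x) \<le> \<tau>"
    using truncation_error_le_of_QE_le[OF K R \<tau>] QE unfolding K_def k_def u_def by simp
  ultimately show ?thesis using error_growth_le_axis_proj[OF K] error_growth_le_mono by metis
qed

lemma htsvd_root:
  assumes L: "1 \<le> L" and R: "1 \<le> R" and \<tau>: "0 \<le> \<tau>"
    and QE: "QE D (2^L) A (block (L-1) 1) \<le> \<tau> / sqnorm D {1..2^L} A * ln (real R)"
  obtains k \<sigma> U V where "k \<le> R"
    "orthonormal_on (tidx D (block (L-1) 1)) U k" "orthonormal_on (tidx D (block (L-1) 2)) V k"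
    "htsvd_basis D L R A (L-1) 1 = pad k U" "htsvd_basis D L R A (L-1) 2 = pad k V"
    "sqnorm D {1..2^L} (\<lambda>x. A x - (\<Sum>r<k. \<sigma> r * U r (restrict x (block (L-1) 1)) * V r (restrict x (block (L-1) 2)))) \<le> \<tau>"
proof -
  define N K1 K2 where "N = (2::nat)^L" and "K1 = block (L-1) 1" and "K2 = block (L-1) 2"
  have K1: "K1 \<subseteq> {1..N}" and K2: "{1..N} - K1 = K2"
    using block_root_children[OF L] unfolding N_def K1_def K2_def by auto
  define k where "k = min R (split_dim D {1..N} K1)"
  define U V where "U = fst (sing_vecs D {1..N} A K1)" and "V = snd (sing_vecs D {1..N} A K1)"
  define \<sigma> where "\<sigma> = sing_vals (tidx D K1) (tidx D ({1..N} - K1)) (matricize A K1)"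
  have svd: "is_svd (tidx D K1) (tidx D ({1..N} - K1)) (matricize A K1) \<sigma> U V"
    using is_svd_sing_vecs[OF finite_atLeastAtMost K1] unfolding \<sigma>_def U_def V_def .
  have k: "k \<le> split_dim D {1..N} K1" unfolding k_def by simp
  have "sqnorm D {1..N} (\<lambda>x. A x - (\<Sum>r<k. \<sigma> r * U r (restrict x K1) * V r (restrict x K2)))
      = sqnorm D {1..N} (\<lambda>x. A x - axis_proj D K1 k U A x)"
    unfolding sqnorm_def using axis_proj_svd_eq_truncation[OF svd k] K2 by (intro sum.cong refl) simp
  also have "\<dots> \<le> \<tau>"
    using truncation_error_le_of_QE_le[OF K1 R \<tau>] QE unfolding k_def U_def K1_def N_def by simp
  finally have err: "sqnorm D {1..N} (\<lambda>x. A x - (\<Sum>r<k. \<sigma> r * U r (restrict x K1) * V r (restrict x K2))) \<le> \<tau>" .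
  have ou: "orthonormal_on (tidx D K1) U k" using is_svd_matricizeD(1)[OF svd] k by (rule orthonormal_on_mono)
  have ov: "orthonormal_on (tidx D K2) V k"
    using is_svd_matricizeD(2)[OF svd] k unfolding K2 by (rule orthonormal_on_mono)
  have basis: "htsvd_basis D L R A (L-1) 1 = pad k U" "htsvd_basis D L R A (L-1) 2 = pad k V"
    unfolding htsvd_basis_def k_def U_def V_def K1_def N_def by simp_all
  show ?thesis
    using that[OF _ ou[unfolded K1_def] ov[unfolded K2_def] basis err[unfolded K1_def K2_def N_def]]
    unfolding k_def by simp
qed

lemma htsvd_error:
  assumes L: "1 \<le> L" and R: "1 \<le> R" and \<tau>: "0 \<le> \<tau>"
    and QE: "\<forall>K\<in>canonical_parts L. QE D (2^L) A K \<le> \<tau> / sqnorm D {1..2^L} A * ln (real R)"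
  shows "\<exists>v a c. sqnorm D {1..2^L} (\<lambda>x. tn_W R v a c L x - A x) \<le> (2 * 2^L - 3) * \<tau>"
proof -
  define u where "u = htsvd_basis D L R A"
  have "block (L-1) 1 \<in> canonical_parts L" using L by (intro block_in_canonical_parts) auto
  then have QE1: "QE D (2^L) A (block (L-1) 1) \<le> \<tau> / sqnorm D {1..2^L} A * ln (real R)" using QE by blast
  obtain k \<sigma> U V where root: "k \<le> R"
    "orthonormal_on (tidx D (block (L-1) 1)) U k" "orthonormal_on (tidx D (block (L-1) 2)) V k"
    "u (L-1) 1 = pad k U" "u (L-1) 2 = pad k V"
    and X: "sqnorm D {1..2^L} (\<lambda>x. A x - (\<Sum>r<k. \<sigma> r * U r (restrict x (block (L-1) 1)) * V r (restrict x (block (L-1) 2)))) \<le> \<tau>"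
    by (rule htsvd_root[OF L R \<tau> QE1, folded u_def])
  define X where "X = (\<lambda>x. \<Sum>r<k. \<sigma> r * U r (restrict x (block (L-1) 1)) * V r (restrict x (block (L-1) 2)))"
  have nodes: "error_growth_le D {1..2^L} A (node_proj D R u l m) \<tau>"
    if "l < L - 1" "1 \<le> m" "m \<le> 2^(L - l)" for l m
  proof -
    have "block l m \<in> canonical_parts L" using that by (intro block_in_canonical_parts) auto
    then show ?thesis using QE unfolding u_def by (intro error_growth_le_htsvd_node[OF that R \<tau>]) blast
  qed
  have "L - (L - 1) = 1" using L by simp
  then have half: "error_growth_le D {1..2^L} A (descendants_proj D R u (L-1) n) ((2 * 2^(L-1) - 2) * \<tau>)"
    if "1 \<le> n" "n \<le> 2" for n
    using that by (intro error_growth_le_descendants_proj[OF _ _ _ nodes]) auto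
  have "error_growth_le D {1..2^L} A (\<lambda>B. descendants_proj D R u (L-1) 1 (descendants_proj D R u (L-1) 2 B))
      ((2 * 2^(L-1) - 2) * \<tau> + (2 * 2^(L-1) - 2) * \<tau>)"
    using error_growth_le_comp[OF half[of 1] half[of 2]] by simp
  then have "sqnorm D {1..2^L} (\<lambda>x. A x - descendants_proj D R u (L-1) 1 (descendants_proj D R u (L-1) 2 X) x)
      \<le> (2 * 2^(L-1) - 2) * \<tau> + (2 * 2^(L-1) - 2) * \<tau> + sqnorm D {1..2^L} (\<lambda>x. A x - X x)"
    unfolding error_growth_le_def by blast
  moreover have "(2 * 2^(L-1) - 2) * \<tau> + (2 * 2^(L-1) - 2) * \<tau> + \<tau> = (2 * 2^L - 3) * \<tau>"
  proof -
    have "(2::real) * 2^(L-1) = 2^L" using L by (simp flip: power_Suc)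
    then show ?thesis by (simp add: algebra_simps)
  qed
  ultimately have "sqnorm D {1..2^L} (\<lambda>x. A x - descendants_proj D R u (L-1) 1 (descendants_proj D R u (L-1) 2 X) x)
      \<le> (2 * 2^L - 3) * \<tau>"
    using X unfolding X_def by linarith
  then have "sqnorm D {1..2^L} (\<lambda>x. tn_W R (leaf_vecs u) (tree_coeffs D u) (\<lambda>i j. if i = j \<and> i < k then \<sigma> i else 0) L x - A x)
      \<le> (2 * 2^L - 3) * \<tau>"
    unfolding sqnorm_def tn_W_eq_descendants_proj_truncation[where u = u, OF L root] X_def
    by (simp add: power2_commute)
  then show ?thesis by blast
qed

lemma tnorm_eq_sqrt_sqnorm: "tnorm D N T = sqrt (sqnorm D {1..N} T)"
  unfolding tnorm_def sqnorm_def ..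

theorem theorem2:
  fixes L R :: nat and D :: "nat \<Rightarrow> nat" and A :: "(nat \<Rightarrow> nat) \<Rightarrow> real" and \<epsilon> :: real
  assumes "L \<ge> 1"
    and "\<forall>n\<in>{1..2^L}. D n > 0"
    and "R > 0"
    and "\<epsilon> > 0"
    and "\<forall>K\<in>canonical_parts L.
           QE D (2^L) A K \<le> \<epsilon>^2 / ((2 * 2^L - 3) * (tnorm D (2^L) A)^2) * ln (real R)"
  shows "\<exists>v a c. tnorm D (2^L) (\<lambda>idx. tn_W R v a c L idx - A idx) \<le> \<epsilon>"
proof -
  define \<tau> where "\<tau> = \<epsilon>^2 / (2 * 2^L - 3)"
  have "(2::real) ^ 1 \<le> 2 ^ L" using assms(1) by (intro power_increasing) auto
  then have c: "0 < (2 * 2^L - 3 :: real)" by simp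
  have QE: "\<forall>K\<in>canonical_parts L. QE D (2^L) A K \<le> \<tau> / sqnorm D {1..2^L} A * ln (real R)"
    using assms(5) unfolding \<tau>_def tnorm_eq_sqrt_sqnorm by (simp add: sqnorm_def sum_nonneg)
  have "1 \<le> R" "0 \<le> \<tau>" using assms(3) c unfolding \<tau>_def by auto
  then obtain v a c' where "sqnorm D {1..2^L} (\<lambda>x. tn_W R v a c' L x - A x) \<le> (2 * 2^L - 3) * \<tau>"
    using htsvd_error[OF assms(1) _ _ QE] by blast
  moreover have "(2 * 2^L - 3) * \<tau> = \<epsilon>^2" using c unfolding \<tau>_def by simp
  ultimately have "tnorm D (2^L) (\<lambda>x. tn_W R v a c' L x - A x) \<le> \<epsilon>"
    using assms(4) real_sqrt_le_mono unfolding tnorm_eq_sqrt_sqnorm by fastforce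
  then show ?thesis by blast
qed

end
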